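(* Let $\eta\in\Upsilon_{z_0}$ and let $(u_M,M)$ and $(v_M,M)$ denote the states of $\widetilde{\mathbf M}_\eta$ and $\widehat{\mathbf M}_\eta$, respectively, at time $M$. Then, for each $M$, $v_M$ has the same distribution as the unique element of $\widehat W$ lying in the coset $u_MW=\{u_Mw:w\in W\}$.
   Context: Let $\Phi$ be a finite irreducible crystallographic root system with simple roots $\{\alpha_i:i\in I\}$, highest root $\theta$, Weyl group $W$ and affine Weyl group $\widetilde W$ with simple reflections $s_i$, $i\in\widetilde I=\{0\}\sqcup I$; $Q^\vee\subseteq V^*$ is the coroot lattice. $\mathcal H_{\widetilde W}=\{\mathrm H_\beta^k=\{\gamma\in V^*:\gamma(\beta)=k\}:\beta\in\Phi^+,k\in\mathbb Z\}$. $\widetilde W$ acts faithfully on $V^*$ on the right, $s_i$ ($i\in I$) reflecting through $\mathrm H^0_{\alpha_i}$ and $s_0$ through $\mathrm H^1_\theta$; $W=\langle s_i:i\in I\rangle$. $\mathcal C=\{\gamma:\gamma(\alpha_i)\ge0\ \forall i\in I\}$, $\mathcal A=\{\gamma\in\mathcal C:\gamma(\theta)\le1\}$, $u\mapsto\mathcal A u$ bijects $\widetilde W$ onto alcoves; $\mathrm H^{(u,s_i)}$ separates $\mathcal A u$ and $\mathcal A s_iu$. $\widehat W=\{w\in\widetilde W:\mathcal A w\subseteq\mathcal C\}$ (each coset $uW$ contains exactly one element of $\widehat W$). Fix $z_0$ in the interior of $\mathcal A$ and $p\in(0,1)$. $\Upsilon_{z_0}$: the set of $\eta\in Q^\vee\setminus\{0\}$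 whose ray from $z_0$ avoids intersections of two or more hyperplanes of $\mathcal H_{\widetilde W}$. For such $\eta$, if the ray passes successively through $\mathcal A u_0=\mathcal A,\mathcal A u_1,\dots$, define $i_j$ by $u_{j+1}=s_{i_j}u_j$; the sequence is periodic with period $N_\eta$. $\widetilde{\mathbf M}_\eta$ is the Markov chain on $\widetilde W\times\mathbb Z/N_\eta\mathbb Z$ started at $(\mathbbm 1,0)$: from $(u,k)$, if $\mathrm H^{(u,s_{i_k})}$ does not separate $\mathcal A u$ from $\mathcal A$, go to $(s_{i_k}u,k+1)$ with probability $p$, else to $(u,k+1)$ with probability $1-p$; if it does separate them, go to $(u,k+1)$. $\widehat{\mathbf M}_\eta$ on $\widehat W\times\mathbb Z/N_\eta\mathbb Z$ is identical except that the move to $(s_{i_k}u,k+1)$ is only allowed (with probability $p$) when also $\mathcal A s_{i_k}u\subseteq\mathcal C$. *)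

theory Defs
  imports "HOL-Analysis.Analysis" "HOL-Probability.Probability"
begin

text \<open>V is a Euclidean space 'a; the dual V* is identified with V via
the inner product, so gamma(beta) is written gamma \<bullet> beta. Affine reflection indices
are 'a option: None is the index 0, Some alpha (alpha a simple root) is the index of s_alpha.
An element u of the affine Weyl group is represented (faithfully) by the map
gamma |-> gamma u (right action); hence s_j u is represented by u o s_j and the product
u v by v o u.\<close>

definition coroot :: "'a::euclidean_space \<Rightarrow> 'a" where
  "coroot \<beta> = (2 / (\<beta> \<bullet> \<beta>)) *\<^sub>R \<beta>"

definition root_system :: "'a::euclidean_space set \<Rightarrow> bool" where
  "root_system \<Phi> \<longleftrightarrow> finite \<Phi> \<and> 0 \<notin> \<Phi> \<and> span \<Phi> = UNIV
     \<and> (\<forall>\<alpha>\<in>\<Phi>. \<forall>\<beta>\<in>\<Phi>. \<beta> - (\<beta> \<bullet> \<alpha>) *\<^sub>R coroot \<alpha> \<in> \<Phi>)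
     \<and> (\<forall>\<alpha>\<in>\<Phi>. \<forall>\<beta>\<in>\<Phi>. \<beta> \<bullet> coroot \<alpha> \<in> \<int>)
     \<and> (\<forall>\<alpha>\<in>\<Phi>. \<forall>c::real. c *\<^sub>R \<alpha> \<in> \<Phi> \<longrightarrow> c = 1 \<or> c = -1)"

definition irreducible_rs :: "'a::euclidean_space set \<Rightarrow> bool" where
  "irreducible_rs \<Phi> \<longleftrightarrow> \<not> (\<exists>\<Phi>1 \<Phi>2. \<Phi>1 \<noteq> {} \<and> \<Phi>2 \<noteq> {} \<and> \<Phi>1 \<union> \<Phi>2 = \<Phi> \<and> \<Phi>1 \<inter> \<Phi>2 = {}
        \<and> (\<forall>a\<in>\<Phi>1. \<forall>b\<in>\<Phi>2. a \<bullet> b = 0))"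

definition nonneg_comb :: "'a::euclidean_space set \<Rightarrow> 'a \<Rightarrow> bool" where
  "nonneg_comb \<Delta> \<beta> \<longleftrightarrow> (\<exists>c::'a \<Rightarrow> nat. \<beta> = (\<Sum>\<alpha>\<in>\<Delta>. real (c \<alpha>) *\<^sub>R \<alpha>))"

definition simple_system :: "'a::euclidean_space set \<Rightarrow> 'a set \<Rightarrow> bool" where
  "simple_system \<Phi> \<Delta> \<longleftrightarrow> \<Delta> \<subseteq> \<Phi> \<and> independent \<Delta> \<and> span \<Delta> = UNIV
     \<and> (\<forall>\<beta>\<in>\<Phi>. nonneg_comb \<Delta> \<beta> \<or> nonneg_comb \<Delta> (- \<beta>))"

definition pos_roots :: "'a::euclidean_space set \<Rightarrow> 'a set \<Rightarrow> 'a set" where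
  "pos_roots \<Phi> \<Delta> = {\<beta>\<in>\<Phi>. nonneg_comb \<Delta> \<beta>}"

definition highest_root :: "'a::euclidean_space set \<Rightarrow> 'a set \<Rightarrow> 'a \<Rightarrow> bool" where
  "highest_root \<Phi> \<Delta> \<theta> \<longleftrightarrow> \<theta> \<in> \<Phi> \<and> (\<forall>\<beta>\<in>\<Phi>. nonneg_comb \<Delta> (\<theta> - \<beta>))"

definition coroot_lattice :: "'a::euclidean_space set \<Rightarrow> 'a set" where
  "coroot_lattice \<Phi> = {x. \<exists>c::'a \<Rightarrow> int. x = (\<Sum>\<beta>\<in>\<Phi>. of_int (c \<beta>) *\<^sub>R coroot \<beta>)}"

definition aff_idx :: "'a set \<Rightarrow> 'a option set" where
  "aff_idx \<Delta> = insert None (Some ` \<Delta>)"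

text \<open>The simple reflection s_j as a map on V*: s_alpha reflects through H^0_alpha,
s_0 through H^1_theta.\<close>
definition sref :: "'a::euclidean_space \<Rightarrow> 'a option \<Rightarrow> 'a \<Rightarrow> 'a" where
  "sref \<theta> j x = (case j of Some \<alpha> \<Rightarrow> x - (x \<bullet> \<alpha>) *\<^sub>R coroot \<alpha>
                          | None \<Rightarrow> x - (x \<bullet> \<theta> - 1) *\<^sub>R coroot \<theta>)"

definition wall :: "'a::euclidean_space \<Rightarrow> 'a option \<Rightarrow> 'a set" where
  "wall \<theta> j = (case j of Some \<alpha> \<Rightarrow> {x. x \<bullet> \<alpha> = 0} | None \<Rightarrow> {x. x \<bullet> \<theta> = 1})"

definition smul :: "'a::euclidean_space \<Rightarrow> 'a option \<Rightarrow> ('a \<Rightarrow> 'a) \<Rightarrow> ('a \<Rightarrow> 'a)" where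
  "smul \<theta> j u = u \<circ> sref \<theta> j"

definition gmul :: "('a \<Rightarrow> 'a) \<Rightarrow> ('a \<Rightarrow> 'a) \<Rightarrow> ('a \<Rightarrow> 'a)" where
  "gmul u v = v \<circ> u"

text \<open>Affine Weyl group and finite Weyl group, as groups of maps generated by the simple
reflections (these are involutions, so the generated monoid is the generated group).\<close>
inductive_set affW :: "'a::euclidean_space set \<Rightarrow> 'a \<Rightarrow> ('a \<Rightarrow> 'a) set" for \<Delta> \<theta> where
  affW_id: "id \<in> affW \<Delta> \<theta>"
| affW_step: "u \<in> affW \<Delta> \<theta> \<Longrightarrow> j \<in> aff_idx \<Delta> \<Longrightarrow> smul \<theta> j u \<in> affW \<Delta> \<theta>"

inductive_set finW :: "'a::euclidean_space set \<Rightarrow> 'a \<Rightarrow> ('a \<Rightarrow> 'a) set" for \<Delta> \<theta> where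
  finW_id: "id \<in> finW \<Delta> \<theta>"
| finW_step: "u \<in> finW \<Delta> \<theta> \<Longrightarrow> \<alpha> \<in> \<Delta> \<Longrightarrow> smul \<theta> (Some \<alpha>) u \<in> finW \<Delta> \<theta>"

definition domC :: "'a::euclidean_space set \<Rightarrow> 'a set" where
  "domC \<Delta> = {\<gamma>. \<forall>\<alpha>\<in>\<Delta>. 0 \<le> \<gamma> \<bullet> \<alpha>}"

definition fundA :: "'a::euclidean_space set \<Rightarrow> 'a \<Rightarrow> 'a set" where
  "fundA \<Delta> \<theta> = {\<gamma> \<in> domC \<Delta>. \<gamma> \<bullet> \<theta> \<le> 1}"

definition alcove :: "'a::euclidean_space set \<Rightarrow> 'a \<Rightarrow> ('a \<Rightarrow> 'a) \<Rightarrow> 'a set" where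
  "alcove \<Delta> \<theta> u = u ` fundA \<Delta> \<theta>"

text \<open>The hyperplane H^(u,s_j) separating A u and A s_j u.\<close>
definition hyp :: "'a::euclidean_space \<Rightarrow> ('a \<Rightarrow> 'a) \<Rightarrow> 'a option \<Rightarrow> 'a set" where
  "hyp \<theta> u j = u ` wall \<theta> j"

definition What :: "'a::euclidean_space set \<Rightarrow> 'a \<Rightarrow> ('a \<Rightarrow> 'a) set" where
  "What \<Delta> \<theta> = {w \<in> affW \<Delta> \<theta>. alcove \<Delta> \<theta> w \<subseteq> domC \<Delta>}"

definition coset :: "'a::euclidean_space set \<Rightarrow> 'a \<Rightarrow> ('a \<Rightarrow> 'a) \<Rightarrow> ('a \<Rightarrow> 'a) set" where
  "coset \<Delta> \<theta> u = {gmul u w | w. w \<in> finW \<Delta> \<theta>}"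

definition coset_rep :: "'a::euclidean_space set \<Rightarrow> 'a \<Rightarrow> ('a \<Rightarrow> 'a) \<Rightarrow> ('a \<Rightarrow> 'a)" where
  "coset_rep \<Delta> \<theta> u = (THE v. v \<in> What \<Delta> \<theta> \<and> v \<in> coset \<Delta> \<theta> u)"

definition separates :: "'a::euclidean_space set \<Rightarrow> 'a set \<Rightarrow> 'a set \<Rightarrow> bool" where
  "separates H X Y \<longleftrightarrow> (\<exists>\<beta> k. \<beta> \<noteq> 0 \<and> H = {x. x \<bullet> \<beta> = k} \<and>
      (((\<forall>x\<in>interior X. x \<bullet> \<beta> < k) \<and> (\<forall>y\<in>interior Y. k < y \<bullet> \<beta>)) \<or>
       ((\<forall>x\<in>interior X. k < x \<bullet> \<beta>) \<and> (\<forall>y\<in>interior Y. y \<bullet> \<beta> < k))))"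

definition hyperplanes :: "'a::euclidean_space set \<Rightarrow> 'a set \<Rightarrow> 'a set set" where
  "hyperplanes \<Phi> \<Delta> = {{x. x \<bullet> \<beta> = of_int k} | \<beta> k. \<beta> \<in> pos_roots \<Phi> \<Delta>}"

definition Upsilon :: "'a::euclidean_space set \<Rightarrow> 'a set \<Rightarrow> 'a \<Rightarrow> 'a set" where
  "Upsilon \<Phi> \<Delta> z0 = {\<eta> \<in> coroot_lattice \<Phi> - {0}. \<forall>t::real. t \<ge> 0 \<longrightarrow>
      \<not> (\<exists>H1\<in>hyperplanes \<Phi> \<Delta>. \<exists>H2\<in>hyperplanes \<Phi> \<Delta>. H1 \<noteq> H2 \<and> z0 + t *\<^sub>R \<eta> \<in> H1 \<and> z0 + t *\<^sub>R \<eta> \<in> H2)}"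

definition ray_seq :: "'a::euclidean_space set \<Rightarrow> 'a \<Rightarrow> 'a \<Rightarrow> 'a \<Rightarrow> (nat \<Rightarrow> 'a option) \<Rightarrow> bool" where
  "ray_seq \<Delta> \<theta> z0 \<eta> i \<longleftrightarrow> (\<forall>j. i j \<in> aff_idx \<Delta>) \<and>
     (\<exists>(u :: nat \<Rightarrow> 'a \<Rightarrow> 'a) (\<tau> :: nat \<Rightarrow> real).
        u 0 = id \<and> \<tau> 0 = 0 \<and> strict_mono \<tau> \<and> filterlim \<tau> at_top sequentially \<and>
        (\<forall>j. u (Suc j) = smul \<theta> (i j) (u j)) \<and>
        (\<forall>j. \<forall>t\<in>{\<tau> j..\<tau> (Suc j)}. z0 + t *\<^sub>R \<eta> \<in> alcove \<Delta> \<theta> (u j)))"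

text \<open>One step of the chain M-tilde (states (u,k), k in {0..<N} representing Z/NZ).\<close>
definition step_tilde :: "'a::euclidean_space set \<Rightarrow> 'a \<Rightarrow> nat \<Rightarrow> (nat \<Rightarrow> 'a option) \<Rightarrow> real
    \<Rightarrow> ('a \<Rightarrow> 'a) \<times> nat \<Rightarrow> (('a \<Rightarrow> 'a) \<times> nat) pmf" where
  "step_tilde \<Delta> \<theta> N i p s = (case s of (u, k) \<Rightarrow>
     (if \<not> separates (hyp \<theta> u (i k)) (alcove \<Delta> \<theta> u) (fundA \<Delta> \<theta>)
      then map_pmf (\<lambda>b. if b then (smul \<theta> (i k) u, Suc k mod N) else (u, Suc k mod N)) (bernoulli_pmf p)
      else return_pmf (u, Suc k mod N)))"

definition step_hat :: "'a::euclidean_space set \<Rightarrow> 'a \<Rightarrow> nat \<Rightarrow> (nat \<Rightarrow> 'a option) \<Rightarrow> real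
    \<Rightarrow> ('a \<Rightarrow> 'a) \<times> nat \<Rightarrow> (('a \<Rightarrow> 'a) \<times> nat) pmf" where
  "step_hat \<Delta> \<theta> N i p s = (case s of (u, k) \<Rightarrow>
     (if \<not> separates (hyp \<theta> u (i k)) (alcove \<Delta> \<theta> u) (fundA \<Delta> \<theta>)
         \<and> alcove \<Delta> \<theta> (smul \<theta> (i k) u) \<subseteq> domC \<Delta>
      then map_pmf (\<lambda>b. if b then (smul \<theta> (i k) u, Suc k mod N) else (u, Suc k mod N)) (bernoulli_pmf p)
      else return_pmf (u, Suc k mod N)))"

definition chain_dist :: "(('b \<Rightarrow> 'b) \<times> nat \<Rightarrow> (('b \<Rightarrow> 'b) \<times> nat) pmf) \<Rightarrow> nat \<Rightarrow> (('b \<Rightarrow> 'b) \<times> nat) pmf" where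
  "chain_dist step M = ((\<lambda>d. bind_pmf d step) ^^ M) (return_pmf (id, 0))"

end

theory Submission
  imports Defs
begin

text \<open>Every state \<open>u\<close> reached by the chain on \<open>affW\<close> has the form \<open>w \<circ> v\<close> with \<open>w\<close> in
  the finite Weyl group and \<open>v \<in> What\<close>; then \<open>v\<close> is the representative of the coset of \<open>u\<close>.
  Since \<open>w\<close> is an orthogonal map permuting the roots, the hyperplanes crossed by the next step
  from \<open>u\<close> and from \<open>v\<close> lie at the same level \<open>k\<close>. If \<open>k \<noteq> 0\<close>, whether the hyperplane
  separates the alcove from the fundamental one depends only on \<open>k\<close> and the type of the step, and
  the neighbouring alcove of \<open>v\<close> stays in the dominant chamber; so both chains make the same move
  on representatives. If \<open>k = 0\<close>, the hyperplane is a wall of the chamber through the origin: the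
  chain on \<open>What\<close> cannot cross it, and crossing it does not change the coset of \<open>u\<close>. Hence taking
  coset representatives lumps one chain onto the other.\<close>

lemma independent_coeff_zero:
  fixes S :: "'a::real_vector set"
  assumes "finite S" "independent S" "(\<Sum>v\<in>S. u v *\<^sub>R v) = 0" "v \<in> S"
  shows "u v = 0"
  using assms dependent_finite[OF assms(1)] by blast

lemma sum_scaleR_single:
  fixes S :: "'a::real_vector set"
  assumes "finite S" "a \<in> S"
  shows "(\<Sum>\<gamma>\<in>S. (if \<gamma> = a then r else 0) *\<^sub>R \<gamma>) = r *\<^sub>R a"
proof -
  have "(\<Sum>\<gamma>\<in>S. (if \<gamma> = a then r else 0) *\<^sub>R \<gamma>) = (\<Sum>\<gamma>\<in>S. if \<gamma> = a then r *\<^sub>R a else 0)"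
    by (rule sum.cong) auto
  then show ?thesis using assms by simp
qed

lemma interior_INT_finite:
  "finite I \<Longrightarrow> interior (\<Inter>i\<in>I. S i) = (\<Inter>i\<in>I. interior (S i))"
  by (induction rule: finite_induct) (simp_all only: INT_insert INT_empty interior_Int interior_UNIV)

lemma nat_change_point: "\<not> P 0 \<Longrightarrow> P n \<Longrightarrow> \<exists>k<n. \<not> P k \<and> P (Suc k)"
proof (induction n)
  case (Suc n) then show ?case by (cases "P n") (auto intro: less_SucI)
qed simp

lemma convex_comb_zero:
  fixes A B :: real
  assumes "A * B < 0"
  obtains m where "0 \<le> m" "m < 1" "(1 - m) * A + m * B = 0"
proof
  have "A \<noteq> B" using assms by auto
  show "0 \<le> A / (A - B)" "A / (A - B) < 1"
    using assms by (auto simp: mult_less_0_iff divide_simps)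
  show "(1 - A / (A - B)) * A + A / (A - B) * B = 0"
    using \<open>A \<noteq> B\<close> by (simp add: field_simps)
qed

definition linear_part :: "('a::real_vector \<Rightarrow> 'a) \<Rightarrow> 'a \<Rightarrow> 'a" where
  "linear_part u x = u x - u 0"

lemma linear_part_add: "u x = linear_part u x + u 0"
  by (simp add: linear_part_def)

lemma linear_part_linear: "linear f \<Longrightarrow> linear_part f = f"
  by (rule ext) (simp add: linear_part_def linear_0)

lemma linear_part_comp:
  assumes "linear (linear_part u)" shows "linear_part (u \<circ> v) = linear_part u \<circ> linear_part v"
proof
  fix x
  have "linear_part (u \<circ> v) x = linear_part u (v x) - linear_part u (v 0)"
    by (simp add: linear_part_def)
  also have "\<dots> = linear_part u (linear_part v x)"
    by (simp add: linear_diff[OF assms] linear_part_def[of v])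
  finally show "linear_part (u \<circ> v) x = (linear_part u \<circ> linear_part v) x" by simp
qed

definition reflection :: "'a::euclidean_space \<Rightarrow> 'a \<Rightarrow> 'a" where
  "reflection b x = x - (x \<bullet> b) *\<^sub>R coroot b"

lemma inner_coroot_self: "b \<noteq> 0 \<Longrightarrow> coroot b \<bullet> b = 2"
  by (simp add: coroot_def)

lemma reflection_eq: "reflection a b = b - (b \<bullet> coroot a) *\<^sub>R a"
  by (simp add: reflection_def coroot_def mult.commute)

lemma reflection_reflection: "b \<noteq> 0 \<Longrightarrow> reflection b (reflection b x) = x"
  by (simp add: reflection_def inner_coroot_self algebra_simps)

lemma reflection_self: "b \<noteq> 0 \<Longrightarrow> reflection b b = - b"
  by (simp add: reflection_def coroot_def algebra_simps scaleR_2)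

lemma reflection_uminus: "reflection (- b) = reflection b"
  by (rule ext) (simp add: reflection_def coroot_def)

lemma orthogonal_transformation_reflection:
  assumes "b \<noteq> 0" shows "orthogonal_transformation (reflection b)"
proof -
  have "linear (reflection b)"
    by (rule linearI) (simp_all add: reflection_def algebra_simps)
  moreover have "reflection b x \<bullet> reflection b y = x \<bullet> y" for x y
    using assms unfolding reflection_def coroot_def
    by (simp add: algebra_simps inner_commute power2_eq_square)
  ultimately show ?thesis by (simp add: orthogonal_transformation_def)
qed

lemma orthogonal_transformation_coroot:
  assumes "orthogonal_transformation L" shows "L (coroot a) = coroot (L a)"
proof -
  have "L a \<bullet> L a = a \<bullet> a" using assms by (simp add: orthogonal_transformation_def)
  then show ?thesis using orthogonal_transformation_scaleR[OF assms] by (simp add: coroot_def)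
qed

lemma orthogonal_transformation_conj_reflection:
  assumes "orthogonal_transformation L" shows "L \<circ> reflection b = reflection (L b) \<circ> L"
proof
  fix x
  have "linear L" using assms orthogonal_transformation_linear by blast
  moreover have "L x \<bullet> L b = x \<bullet> b" using assms by (simp add: orthogonal_transformation_def)
  ultimately show "(L \<circ> reflection b) x = (reflection (L b) \<circ> L) x"
    by (simp add: reflection_def linear_diff linear_scale orthogonal_transformation_coroot[OF assms])
qed

fun refl_word :: "'a::euclidean_space list \<Rightarrow> 'a \<Rightarrow> 'a" where
  "refl_word [] = id"
| "refl_word (a # as) = reflection a \<circ> refl_word as"

lemma refl_word_append: "refl_word (xs @ ys) = refl_word xs \<circ> refl_word ys"
  by (induction xs) auto

lemma sref_Some: "sref \<theta> (Some \<alpha>) = reflection \<alpha>"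
  by (rule ext) (simp add: sref_def reflection_def)

lemma hyperplane_eq_imp_scaled:
  fixes \<beta> :: "'a::euclidean_space"
  assumes "\<beta> \<noteq> 0" "\<beta>' \<noteq> 0" "{x. x \<bullet> \<beta> = k} = {x. x \<bullet> \<beta>' = k'}"
  shows "\<exists>c. c \<noteq> 0 \<and> \<beta>' = c *\<^sub>R \<beta> \<and> k' = c * k"
proof -
  have bb: "\<beta> \<bullet> \<beta> \<noteq> 0" using assms(1) by simp
  define x0 where "x0 = (k / (\<beta> \<bullet> \<beta>)) *\<^sub>R \<beta>"
  define c where "c = (\<beta>' \<bullet> \<beta>) / (\<beta> \<bullet> \<beta>)"
  define v where "v = \<beta>' - c *\<^sub>R \<beta>"
  have x0: "x0 \<bullet> \<beta> = k" using bb by (simp add: x0_def)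
  have vb: "v \<bullet> \<beta> = 0" using bb by (simp add: v_def c_def inner_diff_left)
  have x0': "x0 \<bullet> \<beta>' = k'" using x0 assms(3) by blast
  have "x0 + v \<in> {x. x \<bullet> \<beta> = k}" using x0 vb by (simp add: inner_add_left)
  then have "x0 + v \<in> {x. x \<bullet> \<beta>' = k'}" using assms(3) by blast
  then have "v \<bullet> \<beta>' = 0" using x0' by (simp add: inner_add_left)
  then have "v \<bullet> v = 0" using vb by (simp add: v_def inner_diff_right)
  then have "v = 0" by simp
  then have b': "\<beta>' = c *\<^sub>R \<beta>" by (simp add: v_def)
  then show ?thesis using assms(2) x0' x0 by auto
qed

lemma separates_hyperplane_iff:
  fixes \<beta> :: "'a::euclidean_space"
  assumes b: "\<beta> \<noteq> 0" and x0: "x0 \<in> interior X" and y0: "y0 \<in> interior Y"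
    and sX: "\<forall>x\<in>interior X. if pX then k < x \<bullet> \<beta> else x \<bullet> \<beta> < k"
    and sY: "\<forall>y\<in>interior Y. if pY then k < y \<bullet> \<beta> else y \<bullet> \<beta> < k"
  shows "separates {x. x \<bullet> \<beta> = k} X Y \<longleftrightarrow> pX \<noteq> pY"
proof
  assume "pX \<noteq> pY"
  then show "separates {x. x \<bullet> \<beta> = k} X Y"
    unfolding separates_def using b sX sY by (intro exI[of _ \<beta>] exI[of _ k]) (cases pX; auto)
next
  assume "separates {x. x \<bullet> \<beta> = k} X Y"
  then obtain \<beta>' k' where bk: "\<beta>' \<noteq> 0" "{x. x \<bullet> \<beta> = k} = {x. x \<bullet> \<beta>' = k'}"
    "((\<forall>x\<in>interior X. x \<bullet> \<beta>' < k') \<and> (\<forall>y\<in>interior Y. k' < y \<bullet> \<beta>')) \<or>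
       ((\<forall>x\<in>interior X. k' < x \<bullet> \<beta>') \<and> (\<forall>y\<in>interior Y. y \<bullet> \<beta>' < k'))"
    unfolding separates_def by blast
  obtain c where c: "c \<noteq> 0" "\<beta>' = c *\<^sub>R \<beta>" "k' = c * k"
    using hyperplane_eq_imp_scaled[OF b bk(1,2)] by blast
  have "(x0 \<bullet> \<beta>' - k') * (y0 \<bullet> \<beta>' - k') < 0"
    using bk(3) x0 y0 by (auto simp: mult_less_0_iff)
  moreover have "(x0 \<bullet> \<beta>' - k') * (y0 \<bullet> \<beta>' - k') = (c * c) * ((x0 \<bullet> \<beta> - k) * (y0 \<bullet> \<beta> - k))"
    using c by (simp add: algebra_simps)
  moreover have "0 < c * c" using c(1) by (simp flip: power2_eq_square)
  ultimately have "(x0 \<bullet> \<beta> - k) * (y0 \<bullet> \<beta> - k) < 0"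
    by (simp add: mult_less_0_iff)
  then show "pX \<noteq> pY"
    using sX sY x0 y0 by (cases pX; cases pY) (auto simp: mult_less_0_iff)
qed

section \<open>Lumping of Markov chains\<close>

lemma map_pmf_coin_step:
  "map_pmf f (if c then map_pmf (\<lambda>b. if b then x else y) q else return_pmf y)
     = (if c then map_pmf (\<lambda>b. if b then f x else f y) q else return_pmf (f y))"
  by (simp add: pmf.map_comp o_def if_distrib[of f])

lemma chain_dist_Suc: "chain_dist K (Suc M) = bind_pmf (chain_dist K M) K"
  by (simp add: chain_dist_def)

lemma chain_dist_lumped:
  fixes f :: "('a \<Rightarrow> 'a) \<times> nat \<Rightarrow> ('b \<Rightarrow> 'b) \<times> nat"
  assumes "P (id, 0)" "f (id, 0) = (id, 0)"
    and lump: "\<And>s. P s \<Longrightarrow> map_pmf f (K s) = L (f s)"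
    and closed: "\<And>s s'. P s \<Longrightarrow> s' \<in> set_pmf (K s) \<Longrightarrow> P s'"
  shows "map_pmf f (chain_dist K M) = chain_dist L M"
proof -
  have "map_pmf f (chain_dist K M) = chain_dist L M \<and> (\<forall>s\<in>set_pmf (chain_dist K M). P s)"
  proof (induction M)
    case 0
    then show ?case using assms(1,2) by (simp add: chain_dist_def)
  next
    case (Suc M)
    have "map_pmf f (chain_dist K (Suc M)) = bind_pmf (chain_dist K M) (\<lambda>s. L (f s))"
      using Suc lump by (simp add: chain_dist_Suc map_bind_pmf cong: bind_pmf_cong)
    also have "\<dots> = chain_dist L (Suc M)"
      using Suc by (simp add: chain_dist_Suc bind_map_pmf flip: Suc[THEN conjunct1])
    finally show ?case using Suc closed by (auto simp: chain_dist_Suc)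
  qed
  then show ?thesis ..
qed

locale root_alcove =
  fixes \<Phi> \<Delta> :: "'a::euclidean_space set" and \<theta> z0 :: 'a
  assumes root_system: "root_system \<Phi>" and simple_system: "simple_system \<Phi> \<Delta>"
    and highest_root: "highest_root \<Phi> \<Delta> \<theta>" and z0_interior: "z0 \<in> interior (fundA \<Delta> \<theta>)"
begin

lemma finite_roots: "finite \<Phi>"
  using root_system by (simp add: root_system_def)

lemma root_nonzero: "\<beta> \<in> \<Phi> \<Longrightarrow> \<beta> \<noteq> 0"
  using root_system by (simp add: root_system_def) blast

lemma reflection_root: "\<alpha> \<in> \<Phi> \<Longrightarrow> \<beta> \<in> \<Phi> \<Longrightarrow> reflection \<alpha> \<beta> \<in> \<Phi>"
  using root_system by (simp add: root_system_def reflection_def)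

lemma inner_coroot_Ints: "\<alpha> \<in> \<Phi> \<Longrightarrow> \<beta> \<in> \<Phi> \<Longrightarrow> \<beta> \<bullet> coroot \<alpha> \<in> \<int>"
  using root_system by (simp add: root_system_def)

lemma root_multiple: "\<alpha> \<in> \<Phi> \<Longrightarrow> c *\<^sub>R \<alpha> \<in> \<Phi> \<Longrightarrow> c = 1 \<or> c = -1"
  using root_system by (simp add: root_system_def)

lemma uminus_root: "\<beta> \<in> \<Phi> \<Longrightarrow> - \<beta> \<in> \<Phi>"
  using reflection_root[of \<beta> \<beta>] by (simp add: reflection_self root_nonzero)

lemma simple_subset_roots: "\<Delta> \<subseteq> \<Phi>"
  using simple_system by (simp add: simple_system_def)

lemma simple_root: "\<alpha> \<in> \<Delta> \<Longrightarrow> \<alpha> \<in> \<Phi>"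
  using simple_subset_roots by (rule subsetD)

lemma finite_simple: "finite \<Delta>"
  using simple_subset_roots finite_roots by (rule finite_subset)

lemma independent_simple: "independent \<Delta>"
  using simple_system by (simp add: simple_system_def)

lemma root_pos_or_neg: "\<beta> \<in> \<Phi> \<Longrightarrow> nonneg_comb \<Delta> \<beta> \<or> nonneg_comb \<Delta> (- \<beta>)"
  using simple_system by (simp add: simple_system_def)

lemma highest_root_root: "\<theta> \<in> \<Phi>"
  using highest_root by (simp add: highest_root_def)

lemma highest_root_dominates: "\<beta> \<in> \<Phi> \<Longrightarrow> nonneg_comb \<Delta> (\<theta> - \<beta>)"
  using highest_root by (simp add: highest_root_def)

lemma fundA_eq_halfspaces: "fundA \<Delta> \<theta> = (\<Inter>\<alpha>\<in>\<Delta>. {x. \<alpha> \<bullet> x \<ge> 0}) \<inter> {x. \<theta> \<bullet> x \<le> 1}"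
  by (auto simp: fundA_def domC_def inner_commute)

lemma interior_fundA: "interior (fundA \<Delta> \<theta>) = {x. (\<forall>\<alpha>\<in>\<Delta>. 0 < x \<bullet> \<alpha>) \<and> x \<bullet> \<theta> < 1}"
proof -
  have "interior (fundA \<Delta> \<theta>) = (\<Inter>\<alpha>\<in>\<Delta>. {x. \<alpha> \<bullet> x > 0}) \<inter> {x. \<theta> \<bullet> x < 1}"
    using finite_simple simple_root root_nonzero highest_root_root
    by (simp add: fundA_eq_halfspaces interior_INT_finite)
  then show ?thesis by (auto simp: inner_commute)
qed

lemma segment_interior_fundA:
  assumes "a \<in> interior (fundA \<Delta> \<theta>)" "b \<in> fundA \<Delta> \<theta>" "0 \<le> m" "m < 1"
  shows "(1 - m) *\<^sub>R a + m *\<^sub>R b \<in> interior (fundA \<Delta> \<theta>)"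
proof -
  have "convex (fundA \<Delta> \<theta>)"
    unfolding fundA_eq_halfspaces by (intro convex_Int convex_INT) (auto intro: convex_halfspace_ge convex_halfspace_le)
  moreover have "closed (fundA \<Delta> \<theta>)"
    unfolding fundA_eq_halfspaces by (intro closed_Int closed_INT) (auto intro: closed_halfspace_ge closed_halfspace_le)
  ultimately have "b - (1 - m) *\<^sub>R (b - a) \<in> interior (fundA \<Delta> \<theta>)"
    using assms by (intro mem_interior_closure_convex_shrink) auto
  then show ?thesis by (simp add: algebra_simps)
qed

lemma nonneg_comb_inner_nonneg: "nonneg_comb \<Delta> \<beta> \<Longrightarrow> x \<in> domC \<Delta> \<Longrightarrow> 0 \<le> x \<bullet> \<beta>"
  by (auto simp: nonneg_comb_def domC_def inner_sum_right intro!: sum_nonneg)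

lemma nonneg_comb_inner_pos:
  assumes "nonneg_comb \<Delta> \<beta>" "\<beta> \<noteq> 0" "\<forall>\<alpha>\<in>\<Delta>. 0 < x \<bullet> \<alpha>"
  shows "0 < x \<bullet> \<beta>"
proof -
  obtain c where c: "\<beta> = (\<Sum>\<alpha>\<in>\<Delta>. real (c \<alpha>) *\<^sub>R \<alpha>)"
    using assms(1) nonneg_comb_def by blast
  have "\<exists>\<alpha>\<in>\<Delta>. c \<alpha> \<noteq> 0"
  proof (rule ccontr)
    assume "\<not> ?thesis"
    then have "\<beta> = 0" using c by simp
    then show False using assms(2) by simp
  qed
  then obtain a where a: "a \<in> \<Delta>" "c a > 0" by auto
  have "x \<bullet> \<beta> = (\<Sum>\<alpha>\<in>\<Delta>. real (c \<alpha>) * (x \<bullet> \<alpha>))" by (simp add: c inner_sum_right)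
  also have "\<dots> > 0"
    using a assms(3) finite_simple by (intro sum_pos2[of _ a]) (auto intro: less_imp_le)
  finally show ?thesis .
qed

lemma root_sign_interior_fundA:
  assumes "x \<in> interior (fundA \<Delta> \<theta>)" "\<gamma> \<in> \<Phi>"
  shows "if nonneg_comb \<Delta> \<gamma> then 0 < x \<bullet> \<gamma> else x \<bullet> \<gamma> < 0"
proof -
  have x: "\<forall>\<alpha>\<in>\<Delta>. 0 < x \<bullet> \<alpha>" using assms(1) by (simp add: interior_fundA)
  show ?thesis
  proof (cases "nonneg_comb \<Delta> \<gamma>")
    case True then show ?thesis using nonneg_comb_inner_pos[OF True root_nonzero[OF assms(2)] x] by simp
  next
    case False
    then have "nonneg_comb \<Delta> (- \<gamma>)" using root_pos_or_neg[OF assms(2)] by simp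
    then have "0 < x \<bullet> (- \<gamma>)"
      using nonneg_comb_inner_pos root_nonzero[OF uminus_root[OF assms(2)]] x by blast
    then show ?thesis using False by simp
  qed
qed

lemma root_bounds_interior_fundA:
  assumes "x \<in> interior (fundA \<Delta> \<theta>)" "\<gamma> \<in> \<Phi>"
  shows "-1 < x \<bullet> \<gamma> \<and> x \<bullet> \<gamma> < 1 \<and> x \<bullet> \<gamma> \<noteq> 0"
proof -
  have bound: "0 < x \<bullet> g \<and> x \<bullet> g < 1" if "g \<in> \<Phi>" "nonneg_comb \<Delta> g" for g
  proof -
    have "0 < x \<bullet> g" using root_sign_interior_fundA[OF assms(1) that(1)] that(2) by simp
    moreover have "x \<in> domC \<Delta>" using assms(1) interior_subset by (auto simp: fundA_def)
    then have "0 \<le> x \<bullet> (\<theta> - g)" by (rule nonneg_comb_inner_nonneg[OF highest_root_dominates[OF that(1)]])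
    ultimately show ?thesis using assms(1) by (simp add: interior_fundA inner_diff_right)
  qed
  show ?thesis
    using bound[OF assms(2)] bound[OF uminus_root[OF assms(2)]] root_pos_or_neg[OF assms(2)] by auto
qed

lemma inner_not_Ints_interior_fundA:
  assumes "x \<in> interior (fundA \<Delta> \<theta>)" "\<gamma> \<in> \<Phi>" shows "x \<bullet> \<gamma> \<notin> \<int>"
proof
  assume "x \<bullet> \<gamma> \<in> \<int>"
  then obtain n :: int where "x \<bullet> \<gamma> = of_int n" by (auto elim: Ints_cases)
  then show False using root_bounds_interior_fundA[OF assms] by auto
qed

lemma simple_coeff_unique:
  assumes "(\<Sum>\<gamma>\<in>\<Delta>. a \<gamma> *\<^sub>R \<gamma>) = (\<Sum>\<gamma>\<in>\<Delta>. b \<gamma> *\<^sub>R \<gamma>)" "\<gamma> \<in> \<Delta>"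
  shows "a \<gamma> = b \<gamma>"
proof -
  have "(\<Sum>\<gamma>\<in>\<Delta>. (a \<gamma> - b \<gamma>) *\<^sub>R \<gamma>) = 0"
    using assms(1) by (simp add: scaleR_diff_left sum_subtractf)
  then have "a \<gamma> - b \<gamma> = 0"
    by (rule independent_coeff_zero[OF finite_simple independent_simple _ assms(2)])
  then show ?thesis by simp
qed

lemma simple_nonneg_comb:
  assumes "\<alpha> \<in> \<Delta>" shows "nonneg_comb \<Delta> \<alpha>"
proof -
  have "\<alpha> = (\<Sum>\<gamma>\<in>\<Delta>. (if \<gamma> = \<alpha> then 1 else 0) *\<^sub>R \<gamma>)"
    using sum_scaleR_single[OF finite_simple assms, of 1] by simp
  also have "\<dots> = (\<Sum>\<gamma>\<in>\<Delta>. real (if \<gamma> = \<alpha> then 1 else 0) *\<^sub>R \<gamma>)"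
    by (intro sum.cong) auto
  finally show ?thesis
    unfolding nonneg_comb_def by (rule exI[of _ "\<lambda>\<gamma>. if \<gamma> = \<alpha> then 1 else 0"])
qed

text \<open>This is where reducedness of \<open>\<Phi>\<close> is used.\<close>
lemma pos_root_other_coeff:
  assumes a: "\<alpha> \<in> \<Delta>" and g: "\<gamma> \<in> \<Phi>" and c: "\<gamma> = (\<Sum>\<alpha>'\<in>\<Delta>. real (c \<alpha>') *\<^sub>R \<alpha>')"
    and ne: "\<gamma> \<noteq> \<alpha>"
  shows "\<exists>\<alpha>'\<in>\<Delta>. \<alpha>' \<noteq> \<alpha> \<and> c \<alpha>' > 0"
proof (rule ccontr)
  assume "\<not> ?thesis"
  then have "\<gamma> = (\<Sum>\<alpha>'\<in>\<Delta>. (if \<alpha>' = \<alpha> then real (c \<alpha>) else 0) *\<^sub>R \<alpha>')"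
    unfolding c by (intro sum.cong) auto
  also have "\<dots> = real (c \<alpha>) *\<^sub>R \<alpha>" by (rule sum_scaleR_single[OF finite_simple a])
  finally have \<gamma>: "\<gamma> = real (c \<alpha>) *\<^sub>R \<alpha>" .
  then have "real (c \<alpha>) = 1 \<or> real (c \<alpha>) = -1" using root_multiple simple_root[OF a] g by metis
  then show False using \<gamma> ne by auto
qed

lemma reflection_simple_pos_root:
  assumes a: "\<alpha> \<in> \<Delta>" and b: "\<beta> \<in> \<Phi>" "nonneg_comb \<Delta> \<beta>" and ne: "\<beta> \<noteq> \<alpha>"
  shows "nonneg_comb \<Delta> (reflection \<alpha> \<beta>)"
proof (rule ccontr)
  assume "\<not> ?thesis"
  then have "nonneg_comb \<Delta> (- reflection \<alpha> \<beta>)"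
    using root_pos_or_neg[OF reflection_root[OF simple_root[OF a] b(1)]] by auto
  then obtain d where d: "- reflection \<alpha> \<beta> = (\<Sum>\<gamma>\<in>\<Delta>. real (d \<gamma>) *\<^sub>R \<gamma>)"
    by (auto simp: nonneg_comb_def)
  obtain c where c: "\<beta> = (\<Sum>\<gamma>\<in>\<Delta>. real (c \<gamma>) *\<^sub>R \<gamma>)" using b(2) by (auto simp: nonneg_comb_def)
  define n where "n = \<beta> \<bullet> coroot \<alpha>"
  have "(\<Sum>\<gamma>\<in>\<Delta>. (real (c \<gamma>) + real (d \<gamma>)) *\<^sub>R \<gamma>) = \<beta> + (- reflection \<alpha> \<beta>)"
    by (simp only: scaleR_add_left sum.distrib flip: c d)
  also have "\<dots> = (\<Sum>\<gamma>\<in>\<Delta>. (if \<gamma> = \<alpha> then n else 0) *\<^sub>R \<gamma>)"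
    by (simp add: sum_scaleR_single[OF finite_simple a] reflection_eq n_def)
  finally have eq: "(\<Sum>\<gamma>\<in>\<Delta>. (real (c \<gamma>) + real (d \<gamma>)) *\<^sub>R \<gamma>) = \<dots>" .
  obtain a' where a': "a' \<in> \<Delta>" "a' \<noteq> \<alpha>" "c a' > 0"
    using pos_root_other_coeff[OF a b(1) c ne] by blast
  have "real (c a') + real (d a') = 0" using simple_coeff_unique[OF eq a'(1)] a'(2) by simp
  then show False using a'(3) by simp
qed

lemma simple_inner_nonpos:
  assumes a: "\<alpha> \<in> \<Delta>" and a': "\<alpha>' \<in> \<Delta>" and ne: "\<alpha>' \<noteq> \<alpha>"
  shows "\<alpha> \<bullet> \<alpha>' \<le> 0"
proof (rule ccontr)
  assume pos: "\<not> ?thesis"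
  define n where "n = \<alpha>' \<bullet> coroot \<alpha>"
  have "n > 0" using pos root_nonzero[OF simple_root[OF a]]
    by (simp add: n_def coroot_def inner_commute)
  have coeffs: "reflection \<alpha> \<alpha>' = (\<Sum>\<gamma>\<in>\<Delta>. ((if \<gamma> = \<alpha>' then 1 else 0) + (if \<gamma> = \<alpha> then -n else 0)) *\<^sub>R \<gamma>)"
    by (simp add: scaleR_add_left sum.distrib sum_scaleR_single[OF finite_simple a]
        sum_scaleR_single[OF finite_simple a'] reflection_eq n_def)
  consider "nonneg_comb \<Delta> (reflection \<alpha> \<alpha>')" | "nonneg_comb \<Delta> (- reflection \<alpha> \<alpha>')"
    using root_pos_or_neg[OF reflection_root[OF simple_root[OF a] simple_root[OF a']]] by blast
  then show False
  proof cases
    case 1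
    then obtain d where d: "reflection \<alpha> \<alpha>' = (\<Sum>\<gamma>\<in>\<Delta>. real (d \<gamma>) *\<^sub>R \<gamma>)"
      by (auto simp: nonneg_comb_def)
    have "real (d \<alpha>) = - n" using simple_coeff_unique[OF trans[OF d[symmetric] coeffs] a] ne by simp
    then show False using \<open>n > 0\<close> by simp
  next
    case 2
    then obtain d where d: "- reflection \<alpha> \<alpha>' = (\<Sum>\<gamma>\<in>\<Delta>. real (d \<gamma>) *\<^sub>R \<gamma>)"
      by (auto simp: nonneg_comb_def)
    have "- reflection \<alpha> \<alpha>' = (\<Sum>\<gamma>\<in>\<Delta>. (- ((if \<gamma> = \<alpha>' then 1 else 0) + (if \<gamma> = \<alpha> then -n else 0))) *\<^sub>R \<gamma>)"
      by (subst coeffs) (simp only: scaleR_minus_left sum_negf)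
    then have "real (d \<alpha>') = -1" using simple_coeff_unique[OF trans[OF d[symmetric]] a'] ne by simp
    then show False by simp
  qed
qed

lemma simple_inner_highest_nonneg:
  assumes a: "\<alpha> \<in> \<Delta>" shows "0 \<le> \<alpha> \<bullet> \<theta>"
proof -
  define n where "n = \<theta> \<bullet> coroot \<alpha>"
  obtain d where d: "\<theta> - reflection \<alpha> \<theta> = (\<Sum>\<gamma>\<in>\<Delta>. real (d \<gamma>) *\<^sub>R \<gamma>)"
    using highest_root_dominates[OF reflection_root[OF simple_root[OF a] highest_root_root]]
    by (auto simp: nonneg_comb_def)
  have "\<theta> - reflection \<alpha> \<theta> = (\<Sum>\<gamma>\<in>\<Delta>. (if \<gamma> = \<alpha> then n else 0) *\<^sub>R \<gamma>)"
    by (simp add: sum_scaleR_single[OF finite_simple a] reflection_eq n_def)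
  then have "real (d \<alpha>) = n" using simple_coeff_unique[OF trans[OF d[symmetric]] a] by simp
  then have "0 \<le> n" by simp
  moreover have "0 < \<alpha> \<bullet> \<alpha>" using root_nonzero[OF simple_root[OF a]] by simp
  ultimately show ?thesis by (simp add: n_def coroot_def inner_commute zero_le_divide_iff)
qed

section \<open>The finite Weyl group\<close>

lemma finW_iff_word: "w \<in> finW \<Delta> \<theta> \<longleftrightarrow> (\<exists>as. set as \<subseteq> \<Delta> \<and> w = refl_word as)"
proof
  assume "w \<in> finW \<Delta> \<theta>"
  then show "\<exists>as. set as \<subseteq> \<Delta> \<and> w = refl_word as"
  proof (induction rule: finW.induct)
    case finW_id then show ?case by (intro exI[of _ "[]"]) auto
  next
    case (finW_step u \<alpha>)
    then obtain as where "set as \<subseteq> \<Delta>" "u = refl_word as" by auto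
    then show ?case using finW_step
      by (intro exI[of _ "as @ [\<alpha>]"]) (auto simp: refl_word_append smul_def sref_Some)
  qed
next
  assume "\<exists>as. set as \<subseteq> \<Delta> \<and> w = refl_word as"
  then obtain as where as: "set as \<subseteq> \<Delta>" "w = refl_word as" by auto
  have "refl_word as \<in> finW \<Delta> \<theta>" using as(1)
  proof (induction as rule: rev_induct)
    case Nil then show ?case using finW.finW_id by (simp add: id_def)
  next
    case (snoc a as)
    then have "smul \<theta> (Some a) (refl_word as) \<in> finW \<Delta> \<theta>" by (intro finW_step) auto
    then show ?case by (simp add: refl_word_append smul_def sref_Some o_def)
  qed
  then show "w \<in> finW \<Delta> \<theta>" using as(2) by simp
qed

lemma orthogonal_transformation_word: "set as \<subseteq> \<Delta> \<Longrightarrow> orthogonal_transformation (refl_word as)"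
proof (induction as)
  case (Cons a as)
  have "orthogonal_transformation (reflection a \<circ> refl_word as)"
    using Cons root_nonzero[OF simple_root]
    by (intro orthogonal_transformation_compose orthogonal_transformation_reflection) auto
  then show ?case by (simp add: o_def)
qed (simp add: id_def)

lemma word_root: "set as \<subseteq> \<Delta> \<Longrightarrow> \<beta> \<in> \<Phi> \<Longrightarrow> refl_word as \<beta> \<in> \<Phi>"
  by (induction as arbitrary: \<beta>) (simp_all add: reflection_root simple_root)

lemma word_rev_inverse: "set as \<subseteq> \<Delta> \<Longrightarrow> refl_word (rev as) \<circ> refl_word as = id"
proof (induction as)
  case (Cons a as)
  have "reflection a \<circ> reflection a = id"
    using Cons.prems root_nonzero[OF simple_root] by (auto simp: reflection_reflection)
  have "refl_word (rev (a # as)) \<circ> refl_word (a # as)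
      = refl_word (rev as) \<circ> (reflection a \<circ> reflection a) \<circ> refl_word as"
    by (simp add: refl_word_append comp_assoc)
  also have "\<dots> = refl_word (rev as) \<circ> refl_word as"
    using \<open>reflection a \<circ> reflection a = id\<close> by simp
  also have "\<dots> = id" using Cons by (simp add: fun_eq_iff)
  finally show ?case .
qed simp

lemma orthogonal_transformation_finW: "w \<in> finW \<Delta> \<theta> \<Longrightarrow> orthogonal_transformation w"
  by (auto simp: finW_iff_word orthogonal_transformation_word)

lemma finW_root: "w \<in> finW \<Delta> \<theta> \<Longrightarrow> \<beta> \<in> \<Phi> \<Longrightarrow> w \<beta> \<in> \<Phi>"
  by (auto simp: finW_iff_word word_root)

lemma finW_comp: "w \<in> finW \<Delta> \<theta> \<Longrightarrow> w' \<in> finW \<Delta> \<theta> \<Longrightarrow> w \<circ> w' \<in> finW \<Delta> \<theta>"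
  unfolding finW_iff_word by (metis le_sup_iff refl_word_append set_append)

lemma finW_inverse:
  assumes "w \<in> finW \<Delta> \<theta>" shows "\<exists>w'\<in>finW \<Delta> \<theta>. w' \<circ> w = id"
proof -
  obtain as where "set as \<subseteq> \<Delta>" "w = refl_word as" using assms finW_iff_word by blast
  then show ?thesis
    using word_rev_inverse
    by (intro bexI[of _ "refl_word (rev as)"]) (auto simp: finW_iff_word intro!: exI[of _ "rev as"])
qed

lemma word_exchange:
  assumes cs: "set cs \<subseteq> \<Delta>" and a: "a \<in> \<Delta>" and neg: "\<not> nonneg_comb \<Delta> (refl_word cs a)"
  obtains k where "k < length cs"
    "refl_word (take k cs @ drop (Suc k) cs) = refl_word (cs @ [a])"
proof -
  define P where "P k \<longleftrightarrow> nonneg_comb \<Delta> (refl_word (drop k cs) a)" for k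
  have "P (length cs)" using simple_nonneg_comb[OF a] by (simp add: P_def)
  moreover have "\<not> P 0" using neg by (simp add: P_def)
  ultimately obtain k where k: "k < length cs" "\<not> P k" "P (Suc k)"
    using nat_change_point[of P] by blast
  define b p where "b = cs ! k" and "p = refl_word (drop (Suc k) cs)"
  have drop_k: "drop k cs = b # drop (Suc k) cs" using k(1) by (simp add: b_def Cons_nth_drop_Suc)
  have b: "b \<in> \<Delta>" using k(1) cs by (auto simp: b_def)
  have p: "set (drop (Suc k) cs) \<subseteq> \<Delta>" using cs by (meson set_drop_subset order_trans)
  have "p a = b"
  proof (rule ccontr)
    assume "p a \<noteq> b"
    then have "nonneg_comb \<Delta> (reflection b (p a))"
      using reflection_simple_pos_root[OF b word_root[OF p simple_root[OF a]]] k(3)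
      by (simp add: P_def p_def)
    then show False using k(2) by (simp add: P_def drop_k p_def)
  qed
  have "reflection b \<circ> p \<circ> reflection a = reflection b \<circ> (reflection b \<circ> p)"
    using orthogonal_transformation_conj_reflection[OF orthogonal_transformation_word[OF p]] \<open>p a = b\<close>
    by (simp add: p_def comp_assoc)
  also have "\<dots> = p" using root_nonzero[OF simple_root[OF b]] by (auto simp: reflection_reflection)
  finally have cancel: "reflection b \<circ> p \<circ> reflection a = p" .
  have "refl_word cs = refl_word (take k cs @ b # drop (Suc k) cs)"
    using id_take_nth_drop[OF k(1)] by (simp add: b_def)
  then have "refl_word (cs @ [a]) = refl_word (take k cs) \<circ> (reflection b \<circ> p \<circ> reflection a)"
    by (simp add: refl_word_append p_def comp_assoc)
  then show ?thesis using that k(1) cancel by (simp add: refl_word_append p_def)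
qed

text \<open>For a reduced word ending in \<open>a\<close>, the exchange condition makes \<open>w a\<close> a negative
  root, while \<open>w x \<bullet> w a = x \<bullet> a > 0\<close>.\<close>
lemma finW_fixes_chamber:
  assumes x: "\<forall>\<alpha>\<in>\<Delta>. 0 < x \<bullet> \<alpha>" and w: "w \<in> finW \<Delta> \<theta>" and C: "w x \<in> domC \<Delta>"
  shows "w = id"
proof (rule ccontr)
  assume ne: "w \<noteq> id"
  define S where "S = {bs. set bs \<subseteq> \<Delta> \<and> refl_word bs = w}"
  obtain as where "as \<in> S" using w by (auto simp: S_def finW_iff_word)
  then obtain bs where bs: "bs \<in> S" and minimal: "\<And>cs. cs \<in> S \<Longrightarrow> length bs \<le> length cs"
    using ex_has_least_nat[of "\<lambda>bs. bs \<in> S" as length] by blast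
  have bs_word: "set bs \<subseteq> \<Delta>" "refl_word bs = w" using bs by (auto simp: S_def)
  then have "bs \<noteq> []" using ne by auto
  then obtain cs a where bs_eq: "bs = cs @ [a]" by (metis rev_exhaust)
  have a: "a \<in> \<Delta>" and cs: "set cs \<subseteq> \<Delta>" using bs_word bs_eq by auto
  have "nonneg_comb \<Delta> (refl_word cs a)"
  proof (rule ccontr)
    assume "\<not> nonneg_comb \<Delta> (refl_word cs a)"
    then obtain k where "k < length cs" "refl_word (take k cs @ drop (Suc k) cs) = w"
      using word_exchange[OF cs a] bs_word(2) bs_eq by metis
    moreover have "set (take k cs @ drop (Suc k) cs) \<subseteq> \<Delta>"
      using cs by (auto dest: in_set_takeD in_set_dropD)
    ultimately show False using minimal[of "take k cs @ drop (Suc k) cs"] bs_eq by (simp add: S_def)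
  qed
  then have "0 \<le> w x \<bullet> refl_word cs a" using C by (rule nonneg_comb_inner_nonneg)
  moreover have "w a = - refl_word cs a"
    using bs_word(2) bs_eq root_nonzero[OF simple_root[OF a]]
      linear_neg[OF orthogonal_transformation_linear[OF orthogonal_transformation_word[OF cs]]]
    by (auto simp: refl_word_append reflection_self)
  moreover have "w x \<bullet> w a = x \<bullet> a"
    using orthogonal_transformation_finW[OF w] by (simp add: orthogonal_transformation_def)
  ultimately show False using x a by force
qed

lemma pos_root_descent:
  assumes b: "\<beta> \<in> \<Phi>" "nonneg_comb \<Delta> \<beta>" and nb: "\<beta> \<notin> \<Delta>"
  obtains \<gamma> where "\<gamma> \<in> \<Delta>" "reflection \<gamma> \<beta> \<in> \<Phi>" "nonneg_comb \<Delta> (reflection \<gamma> \<beta>)"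
    "z0 \<bullet> reflection \<gamma> \<beta> < z0 \<bullet> \<beta>"
proof -
  obtain c where c: "\<beta> = (\<Sum>\<gamma>\<in>\<Delta>. real (c \<gamma>) *\<^sub>R \<gamma>)" using b(2) by (auto simp: nonneg_comb_def)
  have "0 < \<beta> \<bullet> \<beta>" using root_nonzero[OF b(1)] by simp
  also have "\<beta> \<bullet> \<beta> = (\<Sum>\<gamma>\<in>\<Delta>. real (c \<gamma>) * (\<beta> \<bullet> \<gamma>))"
    by (subst (2) c) (simp add: inner_sum_right)
  finally obtain \<gamma> where g: "\<gamma> \<in> \<Delta>" "0 < real (c \<gamma>) * (\<beta> \<bullet> \<gamma>)"
    by (meson not_le sum_nonpos)
  have "0 < \<beta> \<bullet> coroot \<gamma>"
    using g root_nonzero[OF simple_root[OF g(1)]] by (simp add: coroot_def zero_less_mult_iff)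
  moreover have "0 < z0 \<bullet> \<gamma>" using z0_interior g(1) by (auto simp: interior_fundA)
  ultimately have "z0 \<bullet> reflection \<gamma> \<beta> < z0 \<bullet> \<beta>" by (simp add: reflection_eq inner_diff_right)
  moreover have "\<beta> \<noteq> \<gamma>" using nb g(1) by auto
  ultimately show ?thesis
    using that g(1) reflection_root[OF simple_root[OF g(1)] b(1)] reflection_simple_pos_root[OF g(1) b]
    by blast
qed

lemma reflection_pos_root_word:
  "\<beta> \<in> \<Phi> \<Longrightarrow> nonneg_comb \<Delta> \<beta> \<Longrightarrow> \<exists>as. set as \<subseteq> \<Delta> \<and> refl_word as = reflection \<beta>"
proof (induction \<beta> rule: measure_induct_rule[where f="\<lambda>\<beta>. card {\<beta>'\<in>\<Phi>. z0 \<bullet> \<beta>' < z0 \<bullet> \<beta>}"])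
  case (less \<beta>)
  show ?case
  proof (cases "\<beta> \<in> \<Delta>")
    case True then show ?thesis by (intro exI[of _ "[\<beta>]"]) auto
  next
    case False
    then obtain \<gamma> where g: "\<gamma> \<in> \<Delta>" and \<beta>': "reflection \<gamma> \<beta> \<in> \<Phi>" "nonneg_comb \<Delta> (reflection \<gamma> \<beta>)"
      and lower: "z0 \<bullet> reflection \<gamma> \<beta> < z0 \<bullet> \<beta>"
      using pos_root_descent[OF less(2,3)] by blast
    have g0: "\<gamma> \<noteq> 0" using root_nonzero[OF simple_root[OF g]] .
    have "{\<beta>''\<in>\<Phi>. z0 \<bullet> \<beta>'' < z0 \<bullet> reflection \<gamma> \<beta>} \<subset> {\<beta>''\<in>\<Phi>. z0 \<bullet> \<beta>'' < z0 \<bullet> \<beta>}"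
      using lower \<beta>'(1) by auto
    then have "card {\<beta>''\<in>\<Phi>. z0 \<bullet> \<beta>'' < z0 \<bullet> reflection \<gamma> \<beta>} < card {\<beta>''\<in>\<Phi>. z0 \<bullet> \<beta>'' < z0 \<bullet> \<beta>}"
      using finite_roots by (intro psubset_card_mono) auto
    then obtain as where as: "set as \<subseteq> \<Delta>" "refl_word as = reflection (reflection \<gamma> \<beta>)"
      using less(1) \<beta>' by blast
    have "reflection \<gamma> \<circ> reflection (reflection \<gamma> \<beta>) = reflection \<beta> \<circ> reflection \<gamma>"
      using orthogonal_transformation_conj_reflection[OF orthogonal_transformation_reflection[OF g0],
          of "reflection \<gamma> \<beta>"]
      by (simp add: reflection_reflection[OF g0])
    then have "reflection \<gamma> \<circ> reflection (reflection \<gamma> \<beta>) \<circ> reflection \<gamma> = reflection \<beta>"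
      by (auto simp: fun_eq_iff reflection_reflection[OF g0])
    then show ?thesis using as g
      by (intro exI[of _ "[\<gamma>] @ as @ [\<gamma>]"]) (auto simp: refl_word_append comp_assoc)
  qed
qed

lemma reflection_finW: "\<beta> \<in> \<Phi> \<Longrightarrow> reflection \<beta> \<in> finW \<Delta> \<theta>"
  using reflection_pos_root_word[of \<beta>] reflection_pos_root_word[of "- \<beta>"] root_pos_or_neg[of \<beta>]
    uminus_root[of \<beta>] reflection_uminus[of \<beta>]
  unfolding finW_iff_word by metis

section \<open>Root isometries and the hyperplane crossed by a step\<close>

definition wall_root :: "'a option \<Rightarrow> 'a" where
  "wall_root j = (case j of Some \<alpha> \<Rightarrow> \<alpha> | None \<Rightarrow> \<theta>)"

definition wall_level :: "'a option \<Rightarrow> real" where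
  "wall_level j = (case j of Some \<alpha> \<Rightarrow> 0 | None \<Rightarrow> 1)"

lemma wall_level_Ints: "wall_level j \<in> \<int>"
  by (cases j) (simp_all add: wall_level_def)

lemma wall_root_root: "j \<in> aff_idx \<Delta> \<Longrightarrow> wall_root j \<in> \<Phi>"
  using simple_root highest_root_root by (auto simp: aff_idx_def wall_root_def)

lemma wall_eq: "wall \<theta> j = {x. x \<bullet> wall_root j = wall_level j}"
  by (cases j) (simp_all add: wall_def wall_root_def wall_level_def)

lemma sref_eq_reflection: "sref \<theta> j x = reflection (wall_root j) x + wall_level j *\<^sub>R coroot (wall_root j)"
  by (cases j) (simp_all add: sref_def reflection_def wall_root_def wall_level_def algebra_simps)

lemma sref_eq: "sref \<theta> j x = x - (x \<bullet> wall_root j - wall_level j) *\<^sub>R coroot (wall_root j)"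
  by (simp add: sref_eq_reflection reflection_def algebra_simps)

lemma inner_wall_root_sref:
  assumes "j \<in> aff_idx \<Delta>"
  shows "sref \<theta> j x \<bullet> wall_root j - wall_level j = - (x \<bullet> wall_root j - wall_level j)"
  using root_nonzero[OF wall_root_root[OF assms]]
  by (simp add: sref_eq inner_coroot_self algebra_simps)

lemma wall_side_interior_fundA:
  assumes "j \<in> aff_idx \<Delta>" "x \<in> interior (fundA \<Delta> \<theta>)"
  shows "if j \<noteq> None then 0 < x \<bullet> wall_root j - wall_level j else x \<bullet> wall_root j - wall_level j < 0"
  using assms by (auto simp: aff_idx_def interior_fundA wall_root_def wall_level_def)

definition root_isometry :: "('a \<Rightarrow> 'a) \<Rightarrow> bool" where
  "root_isometry u \<longleftrightarrow> orthogonal_transformation (linear_part u)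
     \<and> linear_part u ` \<Phi> \<subseteq> \<Phi> \<and> (\<forall>\<gamma>\<in>\<Phi>. u 0 \<bullet> \<gamma> \<in> \<int>)"

lemma root_isometryD:
  assumes "root_isometry u"
  shows "orthogonal_transformation (linear_part u)" "linear_part u ` \<Phi> = \<Phi>"
    "\<And>\<gamma>. \<gamma> \<in> \<Phi> \<Longrightarrow> u 0 \<bullet> \<gamma> \<in> \<int>"
proof -
  show L: "orthogonal_transformation (linear_part u)" using assms by (simp add: root_isometry_def)
  have "linear_part u ` \<Phi> \<subseteq> \<Phi>" using assms by (simp add: root_isometry_def)
  then show "linear_part u ` \<Phi> = \<Phi>"
    by (rule endo_inj_surj[OF finite_roots])
      (rule inj_on_subset[OF orthogonal_transformation_inj[OF L] subset_UNIV])
  show "\<And>\<gamma>. \<gamma> \<in> \<Phi> \<Longrightarrow> u 0 \<bullet> \<gamma> \<in> \<int>" using assms by (simp add: root_isometry_def)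
qed

lemma root_isometry_inner:
  assumes "root_isometry u" shows "u x \<bullet> linear_part u \<gamma> = x \<bullet> \<gamma> + u 0 \<bullet> linear_part u \<gamma>"
proof -
  have "linear_part u x \<bullet> linear_part u \<gamma> = x \<bullet> \<gamma>"
    using root_isometryD(1)[OF assms] by (simp add: orthogonal_transformation_def)
  then show ?thesis by (subst linear_part_add) (simp add: inner_add_left)
qed

lemma root_isometry_id: "root_isometry id"
  by (simp add: root_isometry_def linear_part_def orthogonal_transformation_def linear_iff)

lemma sref_root_isometry:
  assumes j: "j \<in> aff_idx \<Delta>" shows "root_isometry (sref \<theta> j)"
proof -
  define a where "a = wall_root j"
  have a: "a \<in> \<Phi>" using wall_root_root[OF j] by (simp add: a_def)
  have "linear_part (sref \<theta> j) = reflection a"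
    by (rule ext) (simp add: linear_part_def sref_eq_reflection reflection_def a_def)
  moreover have "sref \<theta> j 0 \<bullet> \<gamma> \<in> \<int>" if "\<gamma> \<in> \<Phi>" for \<gamma>
    using inner_coroot_Ints[OF a that] wall_level_Ints
    by (simp add: sref_eq_reflection reflection_def a_def inner_commute)
  ultimately show ?thesis
    using orthogonal_transformation_reflection[OF root_nonzero[OF a]] reflection_root[OF a]
    by (auto simp: root_isometry_def)
qed

lemma root_isometry_comp:
  assumes u: "root_isometry u" and v: "root_isometry v" shows "root_isometry (u \<circ> v)"
proof -
  have oL: "orthogonal_transformation (linear_part u)" and L\<Phi>: "linear_part u ` \<Phi> = \<Phi>"
    using root_isometryD[OF u] by simp_all
  have lin: "linear_part (u \<circ> v) = linear_part u \<circ> linear_part v"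
    using oL orthogonal_transformation_linear linear_part_comp by blast
  have "(u \<circ> v) 0 \<bullet> \<gamma> \<in> \<int>" if g: "\<gamma> \<in> \<Phi>" for \<gamma>
  proof -
    obtain \<gamma>' where g': "\<gamma>' \<in> \<Phi>" "\<gamma> = linear_part u \<gamma>'" using L\<Phi> g by blast
    then have "(u \<circ> v) 0 \<bullet> \<gamma> = v 0 \<bullet> \<gamma>' + u 0 \<bullet> \<gamma>" using root_isometry_inner[OF u, of "v 0" \<gamma>'] by simp
    then show ?thesis using root_isometryD(3)[OF v g'(1)] root_isometryD(3)[OF u g] by simp
  qed
  moreover have "orthogonal_transformation (linear_part u \<circ> linear_part v)"
    using orthogonal_transformation_compose[OF oL root_isometryD(1)[OF v]] .
  moreover have "(linear_part u \<circ> linear_part v) ` \<Phi> \<subseteq> \<Phi>"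
    using L\<Phi> root_isometryD(2)[OF v] unfolding image_comp[symmetric] by simp
  ultimately show ?thesis by (simp add: root_isometry_def lin)
qed

lemma affW_root_isometry: "u \<in> affW \<Delta> \<theta> \<Longrightarrow> root_isometry u"
proof (induction rule: affW.induct)
  case affW_id show ?case by (rule root_isometry_id)
next
  case (affW_step u j)
  show ?case
    unfolding smul_def by (rule root_isometry_comp[OF affW_step.IH sref_root_isometry[OF affW_step.hyps(2)]])
qed

lemma finW_root_isometry:
  assumes "w \<in> finW \<Delta> \<theta>" shows "root_isometry w"
proof -
  have "linear w" using orthogonal_transformation_finW[OF assms] orthogonal_transformation_linear by blast
  then show ?thesis
    using orthogonal_transformation_finW[OF assms] finW_root[OF assms]
    by (auto simp: root_isometry_def linear_part_linear linear_0)
qed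

lemma interior_alcove:
  assumes "root_isometry u" shows "interior (alcove \<Delta> \<theta> u) = u ` interior (fundA \<Delta> \<theta>)"
proof -
  have l: "linear (linear_part u)" "inj (linear_part u)"
    using root_isometryD(1)[OF assms] orthogonal_transformation_linear orthogonal_transformation_inj
    by auto
  have "u ` T = (+) (u 0) ` (linear_part u ` T)" for T
    by (auto simp: image_image linear_part_def)
  then show ?thesis
    by (simp add: alcove_def interior_translation interior_injective_linear_image[OF l])
qed

lemma root_isometry_convex_comb:
  assumes "root_isometry u" shows "u ((1 - l) *\<^sub>R a + l *\<^sub>R b) = (1 - l) *\<^sub>R u a + l *\<^sub>R u b"
proof -
  have "linear (linear_part u)"
    using root_isometryD(1)[OF assms] orthogonal_transformation_linear by blast
  then have "linear_part u ((1 - l) *\<^sub>R a + l *\<^sub>R b) = (1 - l) *\<^sub>R linear_part u a + l *\<^sub>R linear_part u b"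
    by (simp add: linear_add linear_scale)
  then show ?thesis by (simp add: linear_part_def algebra_simps)
qed

lemma root_isometry_inner_not_Ints:
  assumes u: "root_isometry u" and x: "x \<in> interior (fundA \<Delta> \<theta>)" and g: "\<gamma> \<in> \<Phi>"
  shows "u x \<bullet> \<gamma> \<notin> \<int>"
proof
  assume "u x \<bullet> \<gamma> \<in> \<int>"
  obtain \<gamma>' where g': "\<gamma>' \<in> \<Phi>" "\<gamma> = linear_part u \<gamma>'" using root_isometryD(2)[OF u] g by blast
  have "x \<bullet> \<gamma>' = u x \<bullet> \<gamma> - u 0 \<bullet> \<gamma>" using root_isometry_inner[OF u, of x \<gamma>'] g' by simp
  then have "x \<bullet> \<gamma>' \<in> \<int>" using \<open>u x \<bullet> \<gamma> \<in> \<int>\<close> root_isometryD(3)[OF u g] by simp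
  then show False using inner_not_Ints_interior_fundA[OF x g'(1)] by simp
qed

text \<open>The affine function \<open>u \<cdot> \<bullet> \<gamma>\<close> has no zero on the open alcove, hence no sign change on
  the closed one.\<close>
lemma root_isometry_same_sign:
  assumes u: "root_isometry u" and g: "\<gamma> \<in> \<Phi>" and y: "y \<in> fundA \<Delta> \<theta>"
  shows "0 \<le> (u z0 \<bullet> \<gamma>) * (u y \<bullet> \<gamma>)"
proof (rule ccontr)
  assume "\<not> ?thesis"
  then have "(u z0 \<bullet> \<gamma>) * (u y \<bullet> \<gamma>) < 0" by simp
  then obtain m where m: "0 \<le> m" "m < 1" "(1 - m) * (u z0 \<bullet> \<gamma>) + m * (u y \<bullet> \<gamma>) = 0"
    by (rule convex_comb_zero)
  have "(1 - m) *\<^sub>R z0 + m *\<^sub>R y \<in> interior (fundA \<Delta> \<theta>)"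
    using segment_interior_fundA[OF z0_interior y m(1,2)] .
  then have "u ((1 - m) *\<^sub>R z0 + m *\<^sub>R y) \<bullet> \<gamma> \<notin> \<int>"
    using root_isometry_inner_not_Ints[OF u _ g] by blast
  moreover have "u ((1 - m) *\<^sub>R z0 + m *\<^sub>R y) \<bullet> \<gamma> = 0"
    using m(3) by (simp add: root_isometry_convex_comb[OF u] inner_add_left)
  ultimately show False by simp
qed

definition hyp_root :: "('a \<Rightarrow> 'a) \<Rightarrow> 'a option \<Rightarrow> 'a" where
  "hyp_root u j = linear_part u (wall_root j)"

definition hyp_level :: "('a \<Rightarrow> 'a) \<Rightarrow> 'a option \<Rightarrow> real" where
  "hyp_level u j = wall_level j + u 0 \<bullet> hyp_root u j"

lemma hyp_root_root: "root_isometry u \<Longrightarrow> j \<in> aff_idx \<Delta> \<Longrightarrow> hyp_root u j \<in> \<Phi>"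
  using root_isometryD(2) wall_root_root by (auto simp: hyp_root_def)

lemma hyp_level_Ints: "root_isometry u \<Longrightarrow> j \<in> aff_idx \<Delta> \<Longrightarrow> hyp_level u j \<in> \<int>"
  using root_isometryD(3) hyp_root_root wall_level_Ints by (simp add: hyp_level_def)

lemma inner_hyp_root:
  assumes "root_isometry u"
  shows "u x \<bullet> hyp_root u j - hyp_level u j = x \<bullet> wall_root j - wall_level j"
  using root_isometry_inner[OF assms, of x "wall_root j"] by (simp add: hyp_root_def hyp_level_def)

lemma hyp_eq:
  assumes u: "root_isometry u" shows "hyp \<theta> u j = {y. y \<bullet> hyp_root u j = hyp_level u j}"
proof (intro set_eqI iffI)
  fix y assume "y \<in> hyp \<theta> u j"
  then obtain x where "x \<bullet> wall_root j = wall_level j" "y = u x" by (auto simp: hyp_def wall_eq)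
  then show "y \<in> {y. y \<bullet> hyp_root u j = hyp_level u j}" using inner_hyp_root[OF u, of x j] by simp
next
  fix y assume y: "y \<in> {y. y \<bullet> hyp_root u j = hyp_level u j}"
  obtain x where x: "linear_part u x = y - u 0"
    using orthogonal_transformation_surj[OF root_isometryD(1)[OF u]] by (metis surjD)
  then have "u x = y" by (simp add: linear_part_def)
  then show "y \<in> hyp \<theta> u j"
    using inner_hyp_root[OF u, of x j] y by (auto simp: hyp_def wall_eq)
qed

lemma root_isometry_sref_eq:
  assumes u: "root_isometry u"
  shows "u (sref \<theta> j x) = u x - (u x \<bullet> hyp_root u j - hyp_level u j) *\<^sub>R coroot (hyp_root u j)"
proof -
  have oL: "orthogonal_transformation (linear_part u)" using root_isometryD(1)[OF u] .
  then have "linear (linear_part u)" using orthogonal_transformation_linear by blast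
  then have "linear_part u (sref \<theta> j x)
      = linear_part u x - (x \<bullet> wall_root j - wall_level j) *\<^sub>R coroot (hyp_root u j)"
    by (simp add: sref_eq linear_diff linear_scale orthogonal_transformation_coroot[OF oL] hyp_root_def)
  then show ?thesis using inner_hyp_root[OF u, of x j] by (simp add: linear_part_def)
qed

lemma hyp_level_finW_comp:
  assumes v: "root_isometry v" and w: "w \<in> finW \<Delta> \<theta>"
  shows "hyp_level (w \<circ> v) j = hyp_level v j"
proof -
  have ow: "orthogonal_transformation w" using orthogonal_transformation_finW[OF w] .
  then have "linear w" using orthogonal_transformation_linear by blast
  then have "hyp_root (w \<circ> v) j = w (hyp_root v j)"
    by (simp add: hyp_root_def linear_part_comp linear_part_linear)
  then show ?thesis using ow by (simp add: hyp_level_def orthogonal_transformation_def)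
qed

lemma hyp_side_alcove:
  assumes u: "root_isometry u" and j: "j \<in> aff_idx \<Delta>" and y: "y \<in> interior (alcove \<Delta> \<theta> u)"
  shows "if j \<noteq> None then hyp_level u j < y \<bullet> hyp_root u j else y \<bullet> hyp_root u j < hyp_level u j"
proof -
  obtain x where x: "x \<in> interior (fundA \<Delta> \<theta>)" "y = u x" using y interior_alcove[OF u] by auto
  then show ?thesis
    using wall_side_interior_fundA[OF j x(1)] inner_hyp_root[OF u, of x j] by (auto split: if_splits)
qed

lemma separates_level_nonzero:
  assumes u: "root_isometry u" and j: "j \<in> aff_idx \<Delta>" and k: "hyp_level u j \<noteq> 0"
  shows "separates (hyp \<theta> u j) (alcove \<Delta> \<theta> u) (fundA \<Delta> \<theta>) \<longleftrightarrow> (j \<noteq> None) \<noteq> (hyp_level u j < 0)"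
  unfolding hyp_eq[OF u]
proof (rule separates_hyperplane_iff)
  show "hyp_root u j \<noteq> 0" using root_nonzero[OF hyp_root_root[OF u j]] .
  show "u z0 \<in> interior (alcove \<Delta> \<theta> u)" using interior_alcove[OF u] z0_interior by auto
  show "z0 \<in> interior (fundA \<Delta> \<theta>)" by (rule z0_interior)
  show "\<forall>y\<in>interior (alcove \<Delta> \<theta> u). if j \<noteq> None then hyp_level u j < y \<bullet> hyp_root u j
      else y \<bullet> hyp_root u j < hyp_level u j"
    using hyp_side_alcove[OF u j] by blast
  show "\<forall>y\<in>interior (fundA \<Delta> \<theta>). if hyp_level u j < 0 then hyp_level u j < y \<bullet> hyp_root u j
      else y \<bullet> hyp_root u j < hyp_level u j"
  proof
    fix y assume "y \<in> interior (fundA \<Delta> \<theta>)"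
    then have y: "-1 < y \<bullet> hyp_root u j" "y \<bullet> hyp_root u j < 1"
      using root_bounds_interior_fundA[OF _ hyp_root_root[OF u j]] by simp_all
    obtain n :: int where n: "hyp_level u j = of_int n"
      using hyp_level_Ints[OF u j] by (auto elim: Ints_cases)
    then have "n \<le> -1 \<or> 1 \<le> n" using k by auto
    then show "if hyp_level u j < 0 then hyp_level u j < y \<bullet> hyp_root u j
      else y \<bullet> hyp_root u j < hyp_level u j"
      using y n by (auto simp del: of_int_minus)
  qed
qed

lemma separates_level_zero:
  assumes u: "root_isometry u" and j: "j \<in> aff_idx \<Delta>" and k: "hyp_level u j = 0"
  shows "separates (hyp \<theta> u j) (alcove \<Delta> \<theta> u) (fundA \<Delta> \<theta>)
    \<longleftrightarrow> (j \<noteq> None) \<noteq> nonneg_comb \<Delta> (hyp_root u j)"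
  unfolding hyp_eq[OF u]
proof (rule separates_hyperplane_iff)
  show "hyp_root u j \<noteq> 0" using root_nonzero[OF hyp_root_root[OF u j]] .
  show "u z0 \<in> interior (alcove \<Delta> \<theta> u)" using interior_alcove[OF u] z0_interior by auto
  show "z0 \<in> interior (fundA \<Delta> \<theta>)" by (rule z0_interior)
  show "\<forall>y\<in>interior (alcove \<Delta> \<theta> u). if j \<noteq> None then hyp_level u j < y \<bullet> hyp_root u j
      else y \<bullet> hyp_root u j < hyp_level u j"
    using hyp_side_alcove[OF u j] by blast
  show "\<forall>y\<in>interior (fundA \<Delta> \<theta>). if nonneg_comb \<Delta> (hyp_root u j) then hyp_level u j < y \<bullet> hyp_root u j
      else y \<bullet> hyp_root u j < hyp_level u j"
    using root_sign_interior_fundA[OF _ hyp_root_root[OF u j]] k by simp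
qed

lemma highest_wall_point:
  "\<exists>q\<in>fundA \<Delta> \<theta>. q \<bullet> \<theta> = 1 \<and>
     (\<forall>\<gamma>\<in>\<Phi>. nonneg_comb \<Delta> \<gamma> \<and> \<gamma> \<noteq> \<theta> \<longrightarrow> 0 < q \<bullet> \<gamma> \<and> q \<bullet> \<gamma> < 1)"
proof -
  have z: "\<forall>\<alpha>\<in>\<Delta>. 0 < z0 \<bullet> \<alpha>" "z0 \<bullet> \<theta> < 1" using z0_interior by (auto simp: interior_fundA)
  have t0: "\<theta> \<noteq> 0" using root_nonzero[OF highest_root_root] .
  define c where "c = (1 - z0 \<bullet> \<theta>) / (\<theta> \<bullet> \<theta>)"
  define q where "q = z0 + c *\<^sub>R \<theta>"
  have "0 < c" using z(2) t0 by (simp add: c_def)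
  have q\<theta>: "q \<bullet> \<theta> = 1" using t0 by (simp add: q_def c_def inner_add_left)
  have q\<alpha>: "0 < q \<bullet> \<alpha>" if "\<alpha> \<in> \<Delta>" for \<alpha>
  proof -
    have "0 \<le> c * (\<alpha> \<bullet> \<theta>)" using simple_inner_highest_nonneg[OF that] \<open>0 < c\<close> by simp
    moreover have "q \<bullet> \<alpha> = z0 \<bullet> \<alpha> + c * (\<alpha> \<bullet> \<theta>)"
      by (simp add: q_def inner_add_left inner_commute[of \<theta> \<alpha>])
    moreover have "0 < z0 \<bullet> \<alpha>" using z(1) that by blast
    ultimately show ?thesis by linarith
  qed
  have "0 < q \<bullet> \<gamma> \<and> q \<bullet> \<gamma> < 1" if "\<gamma> \<in> \<Phi>" "nonneg_comb \<Delta> \<gamma>" "\<gamma> \<noteq> \<theta>" for \<gamma>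
  proof -
    have "0 < q \<bullet> \<gamma>" using nonneg_comb_inner_pos[OF that(2) root_nonzero[OF that(1)]] q\<alpha> by blast
    moreover have "0 < q \<bullet> (\<theta> - \<gamma>)"
      using nonneg_comb_inner_pos[OF highest_root_dominates[OF that(1)]] q\<alpha> that(3) by simp
    ultimately show ?thesis using q\<theta> by (simp add: inner_diff_right)
  qed
  moreover have "q \<in> fundA \<Delta> \<theta>" using q\<alpha> q\<theta> by (auto simp: fundA_def domC_def less_imp_le)
  ultimately show ?thesis using q\<theta> by blast
qed

lemma simple_wall_point:
  assumes a: "a \<in> \<Delta>"
  shows "\<exists>q\<in>fundA \<Delta> \<theta>. q \<bullet> a = 0 \<and>
    (\<forall>\<gamma>\<in>\<Phi>. nonneg_comb \<Delta> \<gamma> \<and> \<gamma> \<noteq> a \<longrightarrow> 0 < q \<bullet> \<gamma> \<and> q \<bullet> \<gamma> < 1)"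
proof -
  have z: "\<forall>\<alpha>\<in>\<Delta>. 0 < z0 \<bullet> \<alpha>" "z0 \<bullet> \<theta> < 1" using z0_interior by (auto simp: interior_fundA)
  have a0: "a \<noteq> 0" using root_nonzero[OF simple_root[OF a]] .
  define c where "c = (z0 \<bullet> a) / (a \<bullet> a)"
  define q where "q = z0 - c *\<^sub>R a"
  have "0 < c" using z(1) a a0 by (simp add: c_def)
  have qa: "q \<bullet> a = 0" using a0 by (simp add: q_def c_def inner_diff_left)
  have q\<alpha>: "0 < q \<bullet> \<alpha>" if "\<alpha> \<in> \<Delta>" "\<alpha> \<noteq> a" for \<alpha>
  proof -
    have "c * (a \<bullet> \<alpha>) \<le> 0" using simple_inner_nonpos[OF a that] \<open>0 < c\<close> by (simp add: mult_nonneg_nonpos)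
    moreover have "0 < z0 \<bullet> \<alpha>" using z(1) that(1) by blast
    ultimately show ?thesis by (simp add: q_def inner_diff_left)
  qed
  have qC: "q \<in> domC \<Delta>" using q\<alpha> qa by (force simp: domC_def)
  have "0 \<le> c * (a \<bullet> \<theta>)" using simple_inner_highest_nonneg[OF a] \<open>0 < c\<close> by simp
  then have q\<theta>: "q \<bullet> \<theta> < 1" using z(2) by (simp add: q_def inner_diff_left)
  have "0 < q \<bullet> \<gamma> \<and> q \<bullet> \<gamma> < 1" if g: "\<gamma> \<in> \<Phi>" "nonneg_comb \<Delta> \<gamma>" "\<gamma> \<noteq> a" for \<gamma>
  proof -
    obtain d where d: "\<gamma> = (\<Sum>\<alpha>\<in>\<Delta>. real (d \<alpha>) *\<^sub>R \<alpha>)" using g(2) by (auto simp: nonneg_comb_def)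
    obtain a' where a': "a' \<in> \<Delta>" "a' \<noteq> a" "d a' > 0" using pos_root_other_coeff[OF a g(1) d g(3)] by blast
    have "q \<bullet> \<gamma> = (\<Sum>\<alpha>\<in>\<Delta>. real (d \<alpha>) * (q \<bullet> \<alpha>))" by (subst d) (simp add: inner_sum_right)
    also have "\<dots> > 0"
      using a' q\<alpha>[OF a'(1,2)] qC finite_simple by (intro sum_pos2[of _ a']) (auto simp: domC_def)
    finally have "0 < q \<bullet> \<gamma>" .
    moreover have "0 \<le> q \<bullet> (\<theta> - \<gamma>)" using nonneg_comb_inner_nonneg[OF highest_root_dominates[OF g(1)] qC] .
    ultimately show ?thesis using q\<theta> by (simp add: inner_diff_right)
  qed
  moreover have "q \<in> fundA \<Delta> \<theta>" using qC q\<theta> by (simp add: fundA_def)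
  ultimately show ?thesis using qa by blast
qed

lemma wall_point:
  assumes j: "j \<in> aff_idx \<Delta>"
  obtains q where "q \<in> fundA \<Delta> \<theta>" "q \<bullet> wall_root j = wall_level j"
    "\<And>\<gamma>. \<gamma> \<in> \<Phi> \<Longrightarrow> \<gamma> \<noteq> wall_root j \<Longrightarrow> \<gamma> \<noteq> - wall_root j \<Longrightarrow> q \<bullet> \<gamma> \<notin> \<int>"
proof -
  have "\<exists>q\<in>fundA \<Delta> \<theta>. q \<bullet> wall_root j = wall_level j \<and>
      (\<forall>\<gamma>\<in>\<Phi>. nonneg_comb \<Delta> \<gamma> \<and> \<gamma> \<noteq> wall_root j \<longrightarrow> 0 < q \<bullet> \<gamma> \<and> q \<bullet> \<gamma> < 1)"
  proof (cases j)
    case None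
    then show ?thesis using highest_wall_point by (simp add: wall_root_def wall_level_def)
  next
    case (Some a)
    then have "a \<in> \<Delta>" using j by (auto simp: aff_idx_def)
    then show ?thesis using simple_wall_point Some by (simp add: wall_root_def wall_level_def)
  qed
  then obtain q where q: "q \<in> fundA \<Delta> \<theta>" "q \<bullet> wall_root j = wall_level j"
    "\<forall>\<gamma>\<in>\<Phi>. nonneg_comb \<Delta> \<gamma> \<and> \<gamma> \<noteq> wall_root j \<longrightarrow> 0 < q \<bullet> \<gamma> \<and> q \<bullet> \<gamma> < 1"
    by blast
  have "q \<bullet> \<gamma> \<notin> \<int>" if g: "\<gamma> \<in> \<Phi>" "\<gamma> \<noteq> wall_root j" "\<gamma> \<noteq> - wall_root j" for \<gamma>
  proof
    assume "q \<bullet> \<gamma> \<in> \<int>"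
    then obtain n :: int where n: "q \<bullet> \<gamma> = of_int n" by (auto elim: Ints_cases)
    have "- \<gamma> \<noteq> wall_root j" using g(3) by (metis minus_minus)
    then have "(0 < q \<bullet> \<gamma> \<and> q \<bullet> \<gamma> < 1) \<or> (0 < q \<bullet> (- \<gamma>) \<and> q \<bullet> (- \<gamma>) < 1)"
      using q(3) g(1,2) uminus_root[OF g(1)] root_pos_or_neg[OF g(1)] by blast
    then show False using n by auto
  qed
  then show ?thesis using that q(1,2) by blast
qed

lemma What_root_isometry: "v \<in> What \<Delta> \<theta> \<Longrightarrow> root_isometry v"
  by (simp add: What_def affW_root_isometry)

lemma domC_inner_sign:
  assumes x: "x \<in> domC \<Delta>" and b: "\<beta> \<in> \<Phi>"
  shows "if nonneg_comb \<Delta> \<beta> then 0 \<le> x \<bullet> \<beta> else x \<bullet> \<beta> \<le> 0"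
  using nonneg_comb_inner_nonneg[OF _ x, of \<beta>] nonneg_comb_inner_nonneg[OF _ x, of "- \<beta>"]
    root_pos_or_neg[OF b]
  by (cases "nonneg_comb \<Delta> \<beta>") auto

lemma What_inner_sign:
  assumes v: "v \<in> What \<Delta> \<theta>" and x: "x \<in> fundA \<Delta> \<theta>" and b: "\<beta> \<in> \<Phi>"
  shows "if nonneg_comb \<Delta> \<beta> then 0 \<le> v x \<bullet> \<beta> else v x \<bullet> \<beta> \<le> 0"
  using v x by (intro domC_inner_sign[OF _ b]) (auto simp: What_def alcove_def)

text \<open>A hyperplane of level \<open>0\<close> is a wall of the chamber through the origin: the chain on
  \<open>What\<close> never crosses it, and crossing it from \<open>u \<in> v W\<close> does not leave the coset.\<close>
lemma What_level_zero:
  assumes v: "v \<in> What \<Delta> \<theta>" and j: "j \<in> aff_idx \<Delta>" and k: "hyp_level v j = 0"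
  shows "\<not> separates (hyp \<theta> v j) (alcove \<Delta> \<theta> v) (fundA \<Delta> \<theta>)"
    and "\<not> alcove \<Delta> \<theta> (smul \<theta> j v) \<subseteq> domC \<Delta>"
    and "smul \<theta> j v = reflection (hyp_root v j) \<circ> v"
proof -
  have u: "root_isometry v" using What_root_isometry[OF v] .
  define b s where "b = hyp_root v j" and "s = z0 \<bullet> wall_root j - wall_level j"
  have b: "b \<in> \<Phi>" using hyp_root_root[OF u j] by (simp add: b_def)
  have vz: "v z0 \<bullet> b = s" using inner_hyp_root[OF u, of z0 j] k by (simp add: b_def s_def)
  have vsz: "v (sref \<theta> j z0) \<bullet> b = - s"
    using inner_hyp_root[OF u, of "sref \<theta> j z0" j] k inner_wall_root_sref[OF j, of z0]
    by (simp add: b_def s_def)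
  have s: "if j \<noteq> None then 0 < s else s < 0" unfolding s_def by (rule wall_side_interior_fundA[OF j z0_interior])
  have z0A: "z0 \<in> fundA \<Delta> \<theta>" using z0_interior interior_subset by blast
  have side: "(j \<noteq> None) = nonneg_comb \<Delta> b"
    using What_inner_sign[OF v z0A b] vz s by (auto split: if_splits)
  then show "\<not> separates (hyp \<theta> v j) (alcove \<Delta> \<theta> v) (fundA \<Delta> \<theta>)"
    using separates_level_zero[OF u j k] by (simp add: b_def)
  show "\<not> alcove \<Delta> \<theta> (smul \<theta> j v) \<subseteq> domC \<Delta>"
  proof
    assume "alcove \<Delta> \<theta> (smul \<theta> j v) \<subseteq> domC \<Delta>"
    moreover have "v (sref \<theta> j z0) \<in> alcove \<Delta> \<theta> (smul \<theta> j v)"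
      using z0A by (auto simp: alcove_def smul_def)
    ultimately have "v (sref \<theta> j z0) \<in> domC \<Delta>" by blast
    from domC_inner_sign[OF this b] show False using side s vsz by (auto split: if_splits)
  qed
  show "smul \<theta> j v = reflection (hyp_root v j) \<circ> v"
    by (rule ext) (simp add: smul_def root_isometry_sref_eq[OF u] k reflection_def)
qed

lemma root_isometry_inner_wall_point:
  assumes u: "root_isometry u" and j: "j \<in> aff_idx \<Delta>" and k: "hyp_level u j \<noteq> 0"
    and q: "q \<bullet> wall_root j = wall_level j"
      "\<And>\<gamma>. \<gamma> \<in> \<Phi> \<Longrightarrow> \<gamma> \<noteq> wall_root j \<Longrightarrow> \<gamma> \<noteq> - wall_root j \<Longrightarrow> q \<bullet> \<gamma> \<notin> \<int>"
    and a: "a \<in> \<Phi>"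
  shows "u q \<bullet> a \<noteq> 0"
proof -
  obtain \<gamma> where g: "\<gamma> \<in> \<Phi>" "a = linear_part u \<gamma>" using root_isometryD(2)[OF u] a by blast
  have lin: "linear (linear_part u)"
    using root_isometryD(1)[OF u] orthogonal_transformation_linear by blast
  have uq: "u q \<bullet> hyp_root u j = hyp_level u j" using inner_hyp_root[OF u, of q j] q(1) by simp
  consider "\<gamma> = wall_root j" | "\<gamma> = - wall_root j" | "\<gamma> \<noteq> wall_root j" "\<gamma> \<noteq> - wall_root j" by blast
  then show ?thesis
  proof cases
    case 1 then show ?thesis using g(2) uq k by (simp add: hyp_root_def)
  next
    case 2 then show ?thesis using g(2) uq k linear_neg[OF lin] by (simp add: hyp_root_def)
  next
    case 3
    have "u q \<bullet> a = q \<bullet> \<gamma> + u 0 \<bullet> a" using root_isometry_inner[OF u, of q \<gamma>] g(2) by simp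
    moreover have "u 0 \<bullet> a \<in> \<int>" using root_isometryD(3)[OF u a] .
    ultimately show ?thesis using q(2)[OF g(1) 3] by (metis Ints_minus add.commute add_eq_0_iff)
  qed
qed

text \<open>At a generic point \<open>q\<close> of the common wall every simple root is positive, so by
  \<open>root_isometry_same_sign\<close> it is nonnegative on all of \<open>A (s\<^sub>j v)\<close>.\<close>
lemma What_level_nonzero:
  assumes v: "v \<in> What \<Delta> \<theta>" and j: "j \<in> aff_idx \<Delta>" and k: "hyp_level v j \<noteq> 0"
  shows "alcove \<Delta> \<theta> (smul \<theta> j v) \<subseteq> domC \<Delta>"
proof -
  have vA: "v \<in> affW \<Delta> \<theta>" using v by (simp add: What_def)
  define u where "u = smul \<theta> j v"
  have u: "root_isometry u" unfolding u_def by (rule affW_root_isometry[OF affW_step[OF vA j]])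
  obtain q where q: "q \<in> fundA \<Delta> \<theta>" "q \<bullet> wall_root j = wall_level j"
    "\<And>\<gamma>. \<gamma> \<in> \<Phi> \<Longrightarrow> \<gamma> \<noteq> wall_root j \<Longrightarrow> \<gamma> \<noteq> - wall_root j \<Longrightarrow> q \<bullet> \<gamma> \<notin> \<int>"
    using wall_point[OF j] by blast
  have uq: "u q = v q" using q(2) by (simp add: u_def smul_def sref_eq)
  have "0 \<le> u y \<bullet> a" if a: "a \<in> \<Delta>" and y: "y \<in> fundA \<Delta> \<theta>" for a y
  proof -
    have aP: "a \<in> \<Phi>" using simple_root[OF a] .
    have "0 \<le> v q \<bullet> a" using What_inner_sign[OF v q(1) aP] simple_nonneg_comb[OF a] by simp
    moreover have "v q \<bullet> a \<noteq> 0"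
      using root_isometry_inner_wall_point[OF What_root_isometry[OF v] j k q(2,3) aP] .
    ultimately have "0 < u q \<bullet> a" using uq by simp
    moreover have "u z0 \<bullet> a \<noteq> 0" using root_isometry_inner_not_Ints[OF u z0_interior aP] by auto
    ultimately have "0 < u z0 \<bullet> a"
      using root_isometry_same_sign[OF u aP q(1)] by (simp add: zero_le_mult_iff)
    then show ?thesis using root_isometry_same_sign[OF u aP y] by (simp add: zero_le_mult_iff)
  qed
  then show ?thesis by (auto simp: alcove_def u_def domC_def)
qed

section \<open>Coset representatives and the two chains\<close>

lemma coset_self: "v \<in> coset \<Delta> \<theta> v"
proof -
  have "v = gmul v id" by (simp add: gmul_def)
  then show ?thesis using finW.finW_id unfolding coset_def by blast
qed

lemma finW_comp_coset:
  assumes "u \<in> coset \<Delta> \<theta> v" "w \<in> finW \<Delta> \<theta>" shows "w \<circ> u \<in> coset \<Delta> \<theta> v"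
proof -
  obtain w' where "w' \<in> finW \<Delta> \<theta>" "u = w' \<circ> v" using assms(1) by (auto simp: coset_def gmul_def)
  then have "w \<circ> u = gmul v (w \<circ> w')" "w \<circ> w' \<in> finW \<Delta> \<theta>"
    using finW_comp[OF assms(2)] by (simp_all add: gmul_def comp_assoc)
  then show ?thesis unfolding coset_def by blast
qed

lemma coset_trans:
  assumes "u \<in> coset \<Delta> \<theta> v'" "v' \<in> coset \<Delta> \<theta> v" shows "u \<in> coset \<Delta> \<theta> v"
proof -
  obtain w where "w \<in> finW \<Delta> \<theta>" "u = w \<circ> v'" using assms(1) by (auto simp: coset_def gmul_def)
  then show ?thesis using finW_comp_coset[OF assms(2)] by simp
qed

lemma smul_coset: "u \<in> coset \<Delta> \<theta> v \<Longrightarrow> smul \<theta> j u \<in> coset \<Delta> \<theta> (smul \<theta> j v)"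
  by (auto simp: coset_def gmul_def smul_def comp_assoc)

lemma coset_root_isometry: "v \<in> What \<Delta> \<theta> \<Longrightarrow> u \<in> coset \<Delta> \<theta> v \<Longrightarrow> root_isometry u"
  using root_isometry_comp[OF finW_root_isometry What_root_isometry] by (auto simp: coset_def gmul_def)

lemma hyp_level_coset:
  "v \<in> What \<Delta> \<theta> \<Longrightarrow> u \<in> coset \<Delta> \<theta> v \<Longrightarrow> hyp_level u j = hyp_level v j"
  using What_root_isometry hyp_level_finW_comp by (auto simp: coset_def gmul_def)

text \<open>Uniqueness of the representative comes from \<open>finW_fixes_chamber\<close> applied at \<open>v z0\<close>.\<close>
lemma coset_rep_eq:
  assumes v: "v \<in> What \<Delta> \<theta>" and u: "u \<in> coset \<Delta> \<theta> v"
  shows "coset_rep \<Delta> \<theta> u = v"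
  unfolding coset_rep_def
proof (rule the_equality)
  obtain w where w: "w \<in> finW \<Delta> \<theta>" "u = w \<circ> v" using u by (auto simp: coset_def gmul_def)
  obtain w' where w': "w' \<in> finW \<Delta> \<theta>" "w' \<circ> w = id" using finW_inverse[OF w(1)] by blast
  have "v = gmul u w'" using w(2) w'(2) by (simp add: gmul_def flip: comp_assoc)
  then show "v \<in> What \<Delta> \<theta> \<and> v \<in> coset \<Delta> \<theta> u" using v w'(1) by (auto simp: coset_def)
  fix v' assume v': "v' \<in> What \<Delta> \<theta> \<and> v' \<in> coset \<Delta> \<theta> u"
  then obtain w'' where w'': "w'' \<in> finW \<Delta> \<theta>" "v' = w'' \<circ> w \<circ> v"
    using w(2) by (auto simp: coset_def gmul_def comp_assoc)
  have "\<forall>\<alpha>\<in>\<Delta>. 0 < v z0 \<bullet> \<alpha>"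
  proof
    fix \<alpha> assume a: "\<alpha> \<in> \<Delta>"
    have "0 \<le> v z0 \<bullet> \<alpha>"
      using What_inner_sign[OF v _ simple_root[OF a]] z0_interior interior_subset simple_nonneg_comb[OF a]
      by fastforce
    moreover have "v z0 \<bullet> \<alpha> \<notin> \<int>"
      by (rule root_isometry_inner_not_Ints[OF What_root_isometry[OF v] z0_interior simple_root[OF a]])
    ultimately show "0 < v z0 \<bullet> \<alpha>" by (cases "v z0 \<bullet> \<alpha> = 0") auto
  qed
  moreover have "(w'' \<circ> w) (v z0) \<in> domC \<Delta>"
    using v' w''(2) z0_interior interior_subset by (fastforce simp: What_def alcove_def)
  ultimately have "w'' \<circ> w = id" using finW_fixes_chamber finW_comp[OF w''(1) w(1)] by blast
  then show "v' = v" using w''(2) by simp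
qed

lemma smul_coset_level_zero:
  assumes v: "v \<in> What \<Delta> \<theta>" and u: "u \<in> coset \<Delta> \<theta> v" and j: "j \<in> aff_idx \<Delta>"
    and k: "hyp_level v j = 0"
  shows "smul \<theta> j u \<in> coset \<Delta> \<theta> v"
proof -
  have "smul \<theta> j u \<in> coset \<Delta> \<theta> (smul \<theta> j v)" by (rule smul_coset[OF u])
  then have "smul \<theta> j u \<in> coset \<Delta> \<theta> (reflection (hyp_root v j) \<circ> v)"
    unfolding What_level_zero(3)[OF v j k] .
  moreover have "reflection (hyp_root v j) \<circ> v \<in> coset \<Delta> \<theta> v"
    using hyp_root_root[OF What_root_isometry[OF v] j]
    by (intro finW_comp_coset[OF coset_self] reflection_finW)
  ultimately show ?thesis by (rule coset_trans)
qed

lemma smul_What_level_nonzero: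
  "v \<in> What \<Delta> \<theta> \<Longrightarrow> j \<in> aff_idx \<Delta> \<Longrightarrow> hyp_level v j \<noteq> 0 \<Longrightarrow> smul \<theta> j v \<in> What \<Delta> \<theta>"
  using What_level_nonzero by (auto simp: What_def intro: affW_step)

lemma id_What: "id \<in> What \<Delta> \<theta>"
  by (auto simp: What_def alcove_def fundA_def affW.affW_id)

lemma step_tilde_lumps:
  assumes v: "v \<in> What \<Delta> \<theta>" and u: "u \<in> coset \<Delta> \<theta> v" and j: "i k \<in> aff_idx \<Delta>"
  shows "map_pmf (\<lambda>s. (coset_rep \<Delta> \<theta> (fst s), snd s)) (step_tilde \<Delta> \<theta> N i p (u, k))
    = step_hat \<Delta> \<theta> N i p (v, k)"
proof -
  define f where "f = (\<lambda>s::('a \<Rightarrow> 'a) \<times> nat. (coset_rep \<Delta> \<theta> (fst s), snd s))"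
  have fu: "f (u, Suc k mod N) = (v, Suc k mod N)" using coset_rep_eq[OF v u] by (simp add: f_def)
  have lhs: "map_pmf f (step_tilde \<Delta> \<theta> N i p (u, k))
      = (if \<not> separates (hyp \<theta> u (i k)) (alcove \<Delta> \<theta> u) (fundA \<Delta> \<theta>)
         then map_pmf (\<lambda>b. if b then f (smul \<theta> (i k) u, Suc k mod N) else f (u, Suc k mod N)) (bernoulli_pmf p)
         else return_pmf (f (u, Suc k mod N)))"
    by (simp add: step_tilde_def map_pmf_coin_step)
  show ?thesis
  proof (cases "hyp_level v (i k) = 0")
    case True
    have "f (smul \<theta> (i k) u, Suc k mod N) = (v, Suc k mod N)"
      using coset_rep_eq[OF v smul_coset_level_zero[OF v u j True]] by (simp add: f_def)
    then have "(\<lambda>b. if b then f (smul \<theta> (i k) u, Suc k mod N) else f (u, Suc k mod N))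
        = (\<lambda>_. (v, Suc k mod N))" using fu by auto
    then show ?thesis
      unfolding f_def[symmetric] lhs using What_level_zero(2)[OF v j True] fu by (simp add: step_hat_def)
  next
    case False
    have "separates (hyp \<theta> u (i k)) (alcove \<Delta> \<theta> u) (fundA \<Delta> \<theta>)
        \<longleftrightarrow> separates (hyp \<theta> v (i k)) (alcove \<Delta> \<theta> v) (fundA \<Delta> \<theta>)"
      using separates_level_nonzero[OF coset_root_isometry[OF v u] j]
        separates_level_nonzero[OF What_root_isometry[OF v] j False]
        hyp_level_coset[OF v u] False by simp
    moreover have C: "alcove \<Delta> \<theta> (smul \<theta> (i k) v) \<subseteq> domC \<Delta>"
      using What_level_nonzero[OF v j False] .
    moreover have "f (smul \<theta> (i k) u, Suc k mod N) = (smul \<theta> (i k) v, Suc k mod N)"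
      using coset_rep_eq[OF smul_What_level_nonzero[OF v j False] smul_coset[OF u]]
      by (simp add: f_def)
    then have "(\<lambda>b. if b then f (smul \<theta> (i k) u, Suc k mod N) else f (u, Suc k mod N))
        = (\<lambda>b. if b then (smul \<theta> (i k) v, Suc k mod N) else (v, Suc k mod N))" using fu by auto
    ultimately show ?thesis unfolding f_def[symmetric] lhs using fu by (simp add: step_hat_def)
  qed
qed

lemma step_tilde_cosets:
  assumes v: "v \<in> What \<Delta> \<theta>" and u: "u \<in> coset \<Delta> \<theta> v" and j: "i k \<in> aff_idx \<Delta>"
    and s: "s \<in> set_pmf (step_tilde \<Delta> \<theta> N i p (u, k))"
  shows "\<exists>v'\<in>What \<Delta> \<theta>. fst s \<in> coset \<Delta> \<theta> v'"
proof -
  have "fst s = u \<or> fst s = smul \<theta> (i k) u" using s by (auto simp: step_tilde_def split: if_splits)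
  moreover have "\<exists>v'\<in>What \<Delta> \<theta>. smul \<theta> (i k) u \<in> coset \<Delta> \<theta> v'"
  proof (cases "hyp_level v (i k) = 0")
    case True then show ?thesis using v smul_coset_level_zero[OF v u j] by blast
  next
    case False then show ?thesis using smul_What_level_nonzero[OF v j] smul_coset[OF u] by blast
  qed
  ultimately show ?thesis using v u by auto
qed

end

theorem lemma3p1:
  fixes \<Phi> \<Delta> :: "'a::euclidean_space set" and \<theta> z0 \<eta> :: 'a and p :: real
    and i :: "nat \<Rightarrow> 'a option" and N :: nat and M :: nat
  assumes "root_system \<Phi>" and "irreducible_rs \<Phi>" and "simple_system \<Phi> \<Delta>"
    and "highest_root \<Phi> \<Delta> \<theta>"
    and "z0 \<in> interior (fundA \<Delta> \<theta>)" and "0 < p" and "p < 1"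
    and "\<eta> \<in> Upsilon \<Phi> \<Delta> z0"
    and "ray_seq \<Delta> \<theta> z0 \<eta> i"
    and "0 < N" and "\<forall>j. i (j + N) = i j"
  shows "map_pmf fst (chain_dist (step_hat \<Delta> \<theta> N i p) M)
       = map_pmf (\<lambda>s. coset_rep \<Delta> \<theta> (fst s)) (chain_dist (step_tilde \<Delta> \<theta> N i p) M)"
proof -
  interpret root_alcove \<Phi> \<Delta> \<theta> z0 using assms(1,3,4,5) by unfold_locales
  have idx: "i k \<in> aff_idx \<Delta>" for k using assms(9) by (simp add: ray_seq_def)
  define f where "f = (\<lambda>s::('a \<Rightarrow> 'a) \<times> nat. (coset_rep \<Delta> \<theta> (fst s), snd s))"
  have lumped: "map_pmf f (chain_dist (step_tilde \<Delta> \<theta> N i p) M) = chain_dist (step_hat \<Delta> \<theta> N i p) M"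
  proof (rule chain_dist_lumped[where P = "\<lambda>s. \<exists>v\<in>What \<Delta> \<theta>. fst s \<in> coset \<Delta> \<theta> v"])
    show "\<exists>v\<in>What \<Delta> \<theta>. fst (id, 0) \<in> coset \<Delta> \<theta> v" using id_What coset_self by auto
    show "f (id, 0) = (id, 0)" using coset_rep_eq[OF id_What coset_self] by (simp add: f_def)
  next
    fix s :: "('a \<Rightarrow> 'a) \<times> nat" assume "\<exists>v\<in>What \<Delta> \<theta>. fst s \<in> coset \<Delta> \<theta> v"
    then obtain v u k where v: "v \<in> What \<Delta> \<theta>" and u: "u \<in> coset \<Delta> \<theta> v" and s: "s = (u, k)"
      by (cases s) auto
    show "map_pmf f (step_tilde \<Delta> \<theta> N i p s) = step_hat \<Delta> \<theta> N i p (f s)"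
      using step_tilde_lumps[OF v u idx] coset_rep_eq[OF v u] by (simp add: s f_def)
    show "\<exists>v\<in>What \<Delta> \<theta>. fst s' \<in> coset \<Delta> \<theta> v" if "s' \<in> set_pmf (step_tilde \<Delta> \<theta> N i p s)" for s'
      using step_tilde_cosets[OF v u idx] that by (simp add: s)
  qed
  show ?thesis by (simp flip: lumped add: pmf.map_comp o_def f_def)
qed

end
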